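(* There exist constants $c,\alpha,\beta>0$ such that for all sufficiently large $n$ and all $r\ge0$, $0<\epsilon\le 1$ and $R$ with $\epsilon<R$ and $c\sqrt{\log n}\le R\le\sqrt n$, with probability at least $1-1/n^2$ a graph drawn from the stationary distribution of the geometric-MEG $\mathcal{G}(n,r,R,\epsilon)$ is simultaneously an $(h,\alpha R^2/h)$-expander for every $1\le h\le\alpha R^2$ and an $(h,\beta R/\sqrt h)$-expander for every $\alpha R^2\le h\le n/2$.
   Context: $L_{n,\epsilon}=\{(i\epsilon,j\epsilon): i,j\in\mathbb{N},\ i,j\le\sqrt n/\epsilon\}$; $\Gamma(\mathbf{x})=\{\mathbf{y}\in L_{n,\epsilon}:d(\mathbf{x},\mathbf{y})\le r\}$ with $d$ Euclidean distance. Each node $i\in[n]$ has position $P_{i,t}\in L_{n,\epsilon}$ evolving independently as a Markov chain that moves from $\mathbf{x}$ to a uniform random point of $\Gamma(\mathbf{x})$. The geometric-MEG $\mathcal{G}(n,r,R,\epsilon)=\{G_t\}$ has $G_t=([n],E_t)$ with $E_t=\{\{i,j\}: d(P_{i,t},P_{j,t})\le R\}$. It is stationary when the initial positions are independent, each with the stationary law $\pi(\mathbf{x})=|\Gamma(\mathbf{x})|/\sum_{\mathbf{y}}|\Gamma(\mathbf{y})|$; the stationary distribution of $\mathcal{G}$ is the law of $G_0$ then. For $I\subseteq[n]$, $N(I)$ is the set of nodes outside $I$ adjacent to some node of $I$; a graph is an $(h,k)$-expander if every $I$ with $|I|\le h$ has $|N(I)|\ge k|I|$. *)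

theory Defs
  imports Complex_Main "HOL-Library.FuncSet"
begin

definition eucl_dist :: "real \<times> real \<Rightarrow> real \<times> real \<Rightarrow> real" where
  "eucl_dist x y = sqrt ((fst x - fst y)^2 + (snd x - snd y)^2)"

definition lattice :: "nat \<Rightarrow> real \<Rightarrow> (real \<times> real) set" where
  "lattice n \<epsilon> = {(real i * \<epsilon>, real j * \<epsilon>) | i j.
      real i \<le> sqrt (real n) / \<epsilon> \<and> real j \<le> sqrt (real n) / \<epsilon>}"

definition Gamma :: "nat \<Rightarrow> real \<Rightarrow> real \<Rightarrow> real \<times> real \<Rightarrow> (real \<times> real) set" where
  "Gamma n \<epsilon> r x = {y \<in> lattice n \<epsilon>. eucl_dist x y \<le> r}"

text \<open>Stationary law of a single node's position.\<close>
definition stat_pi :: "nat \<Rightarrow> real \<Rightarrow> real \<Rightarrow> real \<times> real \<Rightarrow> real" where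
  "stat_pi n \<epsilon> r x =
     real (card (Gamma n \<epsilon> r x)) / (\<Sum>y\<in>lattice n \<epsilon>. real (card (Gamma n \<epsilon> r y)))"

definition meg_adj :: "real \<Rightarrow> (nat \<Rightarrow> real \<times> real) \<Rightarrow> nat \<Rightarrow> nat \<Rightarrow> bool" where
  "meg_adj R P i j \<longleftrightarrow> i \<noteq> j \<and> eucl_dist (P i) (P j) \<le> R"

definition nbhd :: "nat \<Rightarrow> (nat \<Rightarrow> nat \<Rightarrow> bool) \<Rightarrow> nat set \<Rightarrow> nat set" where
  "nbhd n adj I = {j \<in> {0..<n} - I. \<exists>i\<in>I. adj i j}"

definition is_expander :: "nat \<Rightarrow> (nat \<Rightarrow> nat \<Rightarrow> bool) \<Rightarrow> nat \<Rightarrow> real \<Rightarrow> bool" where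
  "is_expander n adj h k \<longleftrightarrow>
     (\<forall>I. I \<subseteq> {0..<n} \<longrightarrow> card I \<le> h \<longrightarrow> real (card (nbhd n adj I)) \<ge> k * real (card I))"

text \<open>Probability, under the stationary distribution (independent positions with law stat_pi),
  that the snapshot graph G_0 satisfies property Q.\<close>
definition stationary_prob ::
  "nat \<Rightarrow> real \<Rightarrow> real \<Rightarrow> real \<Rightarrow> ((nat \<Rightarrow> nat \<Rightarrow> bool) \<Rightarrow> bool) \<Rightarrow> real" where
  "stationary_prob n r R \<epsilon> Q =
     (\<Sum>P\<in>{P \<in> PiE {0..<n} (\<lambda>_. lattice n \<epsilon>). Q (meg_adj R P)}.
        \<Prod>i\<in>{0..<n}. stat_pi n \<epsilon> r (P i))"

end

theory Submission
  imports Defs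
begin

(* Idea (following the paper): cut the square into a U x U grid of cells of side about R/5,
   so that nodes in equal or 4-adjacent cells are always adjacent.  The stationary law of a
   node is within a factor 16 of uniform, so each cell receives on average between R^2/6400
   and 3 R^2 nodes; by Chernoff bounds and a union bound over the at most 4n cells, with
   probability at least 1 - 8 n exp(-R^2/25600) every cell holds between R^2/25600 and 9 R^2
   nodes.  On this event a set I of nodes either has about R^2 neighbours in its own cells
   (small sets), or, by the vertex-isoperimetric inequality of the grid applied to the cells
   mostly occupied by I, about R sqrt |I| neighbours (large sets). *)

subsection \<open>Chernoff bounds for independent samples\<close>

lemma sum_PiE_prod_power:
  fixes f :: "'a \<Rightarrow> real"
  assumes "finite S"
  shows "(\<Sum>P\<in>PiE {0..<n} (\<lambda>_. S). \<Prod>i\<in>{0..<n}. f (P i)) = (\<Sum>x\<in>S. f x)^n"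
  using prod_sum_PiE[of "{0..<n}" "\<lambda>_. S" "\<lambda>_ y. f y"] assms by simp

lemma exp_count_eq_prod:
  "finite A \<Longrightarrow> exp (s * real (card {i\<in>A. Q i})) = (\<Prod>i\<in>A. exp (if Q i then s else 0))"
proof -
  assume fin: "finite A"
  have "real (card {i\<in>A. Q i}) = (\<Sum>i\<in>A. if Q i then 1 else 0)"
    using fin by (simp add: sum.If_cases Int_def)
  then show ?thesis
    using fin by (simp add: sum_distrib_left if_distrib exp_sum cong: if_cong)
qed

lemma count_mgf:
  fixes w :: "'a \<Rightarrow> real"
  assumes fin: "finite S" and tot: "sum w S = 1" and p: "p = sum w {x\<in>S. x \<in> T}"
  shows "(\<Sum>P\<in>PiE {0..<n} (\<lambda>_. S).
            (\<Prod>i\<in>{0..<n}. w (P i)) * exp (s * real (card {i\<in>{0..<n}. P i \<in> T})))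
         = (1 + p * (exp s - 1))^n"
proof -
  let ?f = "\<lambda>x. w x * exp (if x \<in> T then s else 0)"
  have "(\<Prod>i\<in>{0..<n}. w (P i)) * exp (s * real (card {i\<in>{0..<n}. P i \<in> T}))
        = (\<Prod>i\<in>{0..<n}. ?f (P i))" for P
    using exp_count_eq_prod[of "{0..<n}" s "\<lambda>i. P i \<in> T"] by (simp add: prod.distrib)
  then have "(\<Sum>P\<in>PiE {0..<n} (\<lambda>_. S).
            (\<Prod>i\<in>{0..<n}. w (P i)) * exp (s * real (card {i\<in>{0..<n}. P i \<in> T})))
         = (\<Sum>x\<in>S. ?f x)^n"
    using sum_PiE_prod_power[OF fin, of ?f n] by simp
  also have "(\<Sum>x\<in>S. ?f x) = (\<Sum>x\<in>S. w x + (if x \<in> T then w x * (exp s - 1) else 0))"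
    by (intro sum.cong) (auto simp: algebra_simps)
  also have "\<dots> = 1 + p * (exp s - 1)"
    using fin by (simp add: sum.distrib tot p sum.If_cases sum_distrib_right Int_def conj_commute)
  finally show ?thesis .
qed

lemma exp_markov:
  fixes \<mu> g :: "'b \<Rightarrow> real"
  assumes fin: "finite A" and nn: "\<And>P. P \<in> A \<Longrightarrow> \<mu> P \<ge> 0"
  shows "(\<Sum>P\<in>{P\<in>A. b \<le> g P}. \<mu> P) \<le> exp (- b) * (\<Sum>P\<in>A. \<mu> P * exp (g P))"
proof -
  have "(\<Sum>P\<in>{P\<in>A. b \<le> g P}. \<mu> P) \<le> (\<Sum>P\<in>{P\<in>A. b \<le> g P}. \<mu> P * exp (g P - b))"
  proof (intro sum_mono)
    fix P assume "P \<in> {P\<in>A. b \<le> g P}"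
    then have "1 \<le> exp (g P - b)" "\<mu> P \<ge> 0" using nn by auto
    then show "\<mu> P \<le> \<mu> P * exp (g P - b)" using mult_left_mono[of 1] by fastforce
  qed
  also have "\<dots> \<le> (\<Sum>P\<in>A. \<mu> P * exp (g P - b))"
    using fin nn by (intro sum_mono2) auto
  also have "\<dots> = exp (- b) * (\<Sum>P\<in>A. \<mu> P * exp (g P))"
    by (simp add: sum_distrib_left exp_diff exp_minus field_simps)
  finally show ?thesis .
qed

context
  fixes w :: "'a \<Rightarrow> real" and S T :: "'a set" and p :: real
  assumes fin: "finite S" and nn: "\<And>x. x \<in> S \<Longrightarrow> w x \<ge> 0" and tot: "sum w S = 1"
    and p: "p = sum w {x\<in>S. x \<in> T}"
begin

lemma prob_T_bounds: "0 \<le> p" "p \<le> 1"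
  using p nn fin unfolding tot[symmetric] by (auto intro: sum_nonneg sum_mono2)

lemma config_weight_nonneg:
  "P \<in> PiE {0..<n} (\<lambda>_. S) \<Longrightarrow> (\<Prod>i\<in>{0..<n}. w (P i)) \<ge> 0"
  by (intro prod_nonneg) (auto simp: PiE_def Pi_def intro: nn)

lemma chernoff_lower:
  "(\<Sum>P\<in>{P\<in>PiE {0..<n} (\<lambda>_. S). real (card {i\<in>{0..<n}. P i \<in> T}) \<le> a}.
      \<Prod>i\<in>{0..<n}. w (P i)) \<le> exp (a - real n * p / 2)"
proof -
  let ?A = "PiE {0..<n} (\<lambda>_. S)" and ?X = "\<lambda>P. real (card {i\<in>{0..<n}. P i \<in> T})"
  have "{P\<in>?A. ?X P \<le> a} = {P\<in>?A. - a \<le> (-1) * ?X P}" by auto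
  then have "(\<Sum>P\<in>{P\<in>?A. ?X P \<le> a}. \<Prod>i\<in>{0..<n}. w (P i))
      = (\<Sum>P\<in>{P\<in>?A. - a \<le> (-1) * ?X P}. \<Prod>i\<in>{0..<n}. w (P i))" by simp
  also have "\<dots> \<le> exp (- (- a)) * (\<Sum>P\<in>?A. (\<Prod>i\<in>{0..<n}. w (P i)) * exp ((-1) * ?X P))"
    by (rule exp_markov) (use fin config_weight_nonneg in \<open>auto simp: finite_PiE\<close>)
  also have "\<dots> = exp a * (1 + p * (exp (-1) - 1))^n"
    using count_mgf[OF fin tot p, of n "-1"] by simp
  also have "\<dots> \<le> exp a * exp (- p / 2) ^ n"
  proof -
    have "exp (-1::real) \<le> 1/2"
      using exp_ge_add_one_self[of 1] by (simp add: exp_minus field_simps)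
    then have "1 + p * (exp (-1) - 1) \<le> 1 - p / 2"
      using mult_left_mono[of "exp (-1)" "1/2" p] prob_T_bounds by (simp add: algebra_simps)
    also have "\<dots> \<le> exp (- p / 2)" using exp_ge_add_one_self[of "- p / 2"] by simp
    finally have "1 + p * (exp (-1) - 1) \<le> exp (- p / 2)" .
    moreover have "0 \<le> 1 + p * (exp (-1) - 1)"
    proof -
      have "0 \<le> p * exp (-1)" using prob_T_bounds by simp
      moreover have "p * (exp (-1) - 1) = p * exp (-1) - p" by (simp add: right_diff_distrib)
      ultimately show ?thesis using prob_T_bounds by linarith
    qed
    ultimately show ?thesis by (intro mult_left_mono power_mono) auto
  qed
  also have "\<dots> = exp (a - real n * p / 2)"
    by (simp add: exp_of_nat_mult[symmetric] exp_add[symmetric])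
  finally show ?thesis .
qed

lemma chernoff_upper:
  "(\<Sum>P\<in>{P\<in>PiE {0..<n} (\<lambda>_. S). a \<le> real (card {i\<in>{0..<n}. P i \<in> T})}.
      \<Prod>i\<in>{0..<n}. w (P i)) \<le> exp (2 * real n * p - a)"
proof -
  let ?A = "PiE {0..<n} (\<lambda>_. S)" and ?X = "\<lambda>P. real (card {i\<in>{0..<n}. P i \<in> T})"
  have "(\<Sum>P\<in>{P\<in>?A. a \<le> ?X P}. \<Prod>i\<in>{0..<n}. w (P i))
      \<le> exp (- a) * (\<Sum>P\<in>?A. (\<Prod>i\<in>{0..<n}. w (P i)) * exp (1 * ?X P))"
    using exp_markov[of ?A "\<lambda>P. \<Prod>i\<in>{0..<n}. w (P i)" a ?X]
    by (simp add: fin finite_PiE config_weight_nonneg)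
  also have "\<dots> = exp (- a) * (1 + p * (exp 1 - 1))^n"
    using count_mgf[OF fin tot p, of n 1] by simp
  also have "\<dots> \<le> exp (- a) * exp (2 * p) ^ n"
  proof -
    have "exp 1 - 1 \<le> (2::real)" using exp_le by simp
    then have "1 + p * (exp 1 - 1) \<le> 1 + 2 * p"
      using mult_left_mono[of "exp 1 - 1" 2 p] prob_T_bounds by (simp add: algebra_simps)
    also have "\<dots> \<le> exp (2 * p)" using exp_ge_add_one_self[of "2 * p"] by simp
    finally have "1 + p * (exp 1 - 1) \<le> exp (2 * p)" .
    moreover have "0 \<le> 1 + p * (exp 1 - 1)" using prob_T_bounds by simp
    ultimately show ?thesis by (intro mult_left_mono power_mono) auto
  qed
  also have "\<dots> = exp (2 * real n * p - a)"
    by (simp add: exp_of_nat_mult[symmetric] exp_add[symmetric])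
  finally show ?thesis .
qed

end


subsection \<open>Vertex isoperimetry in the square grid\<close>

definition grid_adj :: "nat \<times> nat \<Rightarrow> nat \<times> nat \<Rightarrow> bool" where
  "grid_adj x y \<longleftrightarrow> (fst x = fst y \<and> (snd x = snd y + 1 \<or> snd y = snd x + 1)) \<or>
                     (snd x = snd y \<and> (fst x = fst y + 1 \<or> fst y = fst x + 1))"

definition grid_boundary :: "nat \<Rightarrow> (nat \<times> nat) set \<Rightarrow> (nat \<times> nat) set" where
  "grid_boundary U H = {d \<in> {0..<U} \<times> {0..<U} - H. \<exists>c\<in>H. grid_adj c d}"

lemma grid_adj_sym: "grid_adj x y \<longleftrightarrow> grid_adj y x"
  unfolding grid_adj_def by auto

lemma finite_grid_boundary: "finite (grid_boundary U H)"
  unfolding grid_boundary_def by (rule finite_subset[of _ "{0..<U} \<times> {0..<U}"]) auto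

lemma discrete_ivt:
  fixes Q :: "nat \<Rightarrow> bool"
  assumes "a < U" "b < U" "Q a" "\<not> Q b"
  shows "\<exists>j. j + 1 < U \<and> Q j \<noteq> Q (j + 1)"
proof (rule ccontr)
  assume "\<not> ?thesis"
  then have "Q k = Q 0" if "k < U" for k
    using that by (induction k) auto
  then show False using assms by metis
qed

lemma path_meets_boundary:
  assumes steps: "\<And>j. j + 1 < U \<Longrightarrow> grid_adj (walk j) (walk (j + 1))"
    and inside: "\<And>j. j < U \<Longrightarrow> walk j \<in> {0..<U} \<times> {0..<U}"
    and "j1 < U" "j2 < U" "walk j1 \<in> H" "walk j2 \<notin> H"
  shows "\<exists>j<U. walk j \<in> grid_boundary U H"
proof -
  obtain j where j: "j + 1 < U" "(walk j \<in> H) \<noteq> (walk (j + 1) \<in> H)"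
    using discrete_ivt[of j1 U j2 "\<lambda>j. walk j \<in> H"] assms by auto
  have "grid_adj (walk j) (walk (j + 1))" "grid_adj (walk (j + 1)) (walk j)"
    using steps[OF j(1)] grid_adj_sym by auto
  then have "walk (j + 1) \<in> grid_boundary U H \<or> walk j \<in> grid_boundary U H"
    using j inside[of j] inside[of "j + 1"] unfolding grid_boundary_def by auto
  then show ?thesis using j(1) by (metis add_lessD1)
qed

definition rows_meeting :: "nat \<Rightarrow> (nat \<times> nat) set \<Rightarrow> nat set" where
  "rows_meeting U H = {i. i < U \<and> (\<exists>j<U. (i, j) \<in> H)}"

definition cols_meeting :: "nat \<Rightarrow> (nat \<times> nat) set \<Rightarrow> nat set" where
  "cols_meeting U H = {j. j < U \<and> (\<exists>i<U. (i, j) \<in> H)}"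

text \<open>Every row (and every column) meeting both H and its complement contains a boundary
  cell; distinct rows give distinct boundary cells.\<close>
lemma mixed_rows_le_boundary:
  "card (rows_meeting U H \<inter> rows_meeting U (- H)) \<le> card (grid_boundary U H)"
proof -
  have "rows_meeting U H \<inter> rows_meeting U (- H) \<subseteq> fst ` grid_boundary U H"
  proof
    fix i assume "i \<in> rows_meeting U H \<inter> rows_meeting U (- H)"
    then obtain j1 j2 where "i < U" "j1 < U" "(i, j1) \<in> H" "j2 < U" "(i, j2) \<notin> H"
      unfolding rows_meeting_def by auto
    then obtain j where "(i, j) \<in> grid_boundary U H"
      using path_meets_boundary[of U "\<lambda>j. (i, j)" j1 j2 H] by (auto simp: grid_adj_def)
    then show "i \<in> fst ` grid_boundary U H" by force
  qed
  then show ?thesis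
    using card_mono[OF finite_imageI[OF finite_grid_boundary]] card_image_le[OF finite_grid_boundary]
    by (meson order_trans)
qed

lemma mixed_cols_le_boundary:
  "card (cols_meeting U H \<inter> cols_meeting U (- H)) \<le> card (grid_boundary U H)"
proof -
  have "cols_meeting U H \<inter> cols_meeting U (- H) \<subseteq> snd ` grid_boundary U H"
  proof
    fix j assume "j \<in> cols_meeting U H \<inter> cols_meeting U (- H)"
    then obtain i1 i2 where "j < U" "i1 < U" "(i1, j) \<in> H" "i2 < U" "(i2, j) \<notin> H"
      unfolding cols_meeting_def by auto
    then obtain i where "(i, j) \<in> grid_boundary U H"
      using path_meets_boundary[of U "\<lambda>i. (i, j)" i1 i2 H] by (auto simp: grid_adj_def)
    then show "j \<in> snd ` grid_boundary U H" by force
  qed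
  then show ?thesis
    using card_mono[OF finite_imageI[OF finite_grid_boundary]] card_image_le[OF finite_grid_boundary]
    by (meson order_trans)
qed

text \<open>A row lying entirely in H makes every column meet H, a row
  lying entirely outside H makes every column meet the complement, and symmetrically for
  columns.\<close>
lemma grid_line_cases:
  obtains "rows_meeting U H \<subseteq> rows_meeting U (- H)" "cols_meeting U H \<subseteq> cols_meeting U (- H)"
  | "rows_meeting U (- H) \<subseteq> rows_meeting U H" "cols_meeting U (- H) \<subseteq> cols_meeting U H"
  | "{0..<U} \<subseteq> cols_meeting U H \<inter> cols_meeting U (- H)"
  | "{0..<U} \<subseteq> rows_meeting U H \<inter> rows_meeting U (- H)"
proof -
  define full_row where "full_row X \<longleftrightarrow> (\<exists>i<U. \<forall>j<U. (i, j) \<in> X)" for X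
  define full_col where "full_col X \<longleftrightarrow> (\<exists>j<U. \<forall>i<U. (i, j) \<in> X)" for X
  have no_full: "\<not> full_row H \<Longrightarrow> rows_meeting U H \<subseteq> rows_meeting U (- H)"
    "\<not> full_row (- H) \<Longrightarrow> rows_meeting U (- H) \<subseteq> rows_meeting U H"
    "\<not> full_col H \<Longrightarrow> cols_meeting U H \<subseteq> cols_meeting U (- H)"
    "\<not> full_col (- H) \<Longrightarrow> cols_meeting U (- H) \<subseteq> cols_meeting U H"
    unfolding full_row_def full_col_def rows_meeting_def cols_meeting_def by auto
  have full: "full_row X \<Longrightarrow> {0..<U} \<subseteq> cols_meeting U X"
    "full_col X \<Longrightarrow> {0..<U} \<subseteq> rows_meeting U X" for X
    unfolding full_row_def full_col_def rows_meeting_def cols_meeting_def by auto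
  have crossing: "\<not> (full_row H \<and> full_col (- H))" "\<not> (full_row (- H) \<and> full_col H)"
    unfolding full_row_def full_col_def by auto
  show thesis using that no_full full crossing by (meson le_inf_iff)
qed

text \<open>In the first two cases of the line analysis, H (or its complement) lies in the product of
  the mixed rows and the mixed columns; in the last two, U \<le> |boundary|.\<close>
theorem grid_isoperimetry:
  assumes HG: "H \<subseteq> {0..<U} \<times> {0..<U}"
  shows "min (card H) (card ({0..<U} \<times> {0..<U} - H)) \<le> (card (grid_boundary U H))^2"
proof -
  let ?G = "{0..<U} \<times> {0..<U}" and ?b = "card (grid_boundary U H)"
  let ?R = "rows_meeting U" and ?C = "cols_meeting U"
  note rows = mixed_rows_le_boundary[of U H] and cols = mixed_cols_le_boundary[of U H]
  have finite_lines: "finite (?R X)" "finite (?C X)" for X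
    unfolding rows_meeting_def cols_meeting_def by auto
  have prod_le: "x * y \<le> ?b^2" if "x \<le> ?b" "y \<le> ?b" for x y
    using mult_le_mono[OF that] by (simp add: power2_eq_square)
  have box: "card X \<le> card (?R X) * card (?C X)" if "X \<subseteq> ?G" for X
  proof -
    have "X \<subseteq> ?R X \<times> ?C X" using that by (force simp: rows_meeting_def cols_meeting_def)
    then have "card X \<le> card (?R X \<times> ?C X)" by (intro card_mono) (simp_all add: finite_lines)
    then show ?thesis by (simp add: card_cartesian_product)
  qed
  have H_box: "card H \<le> card (?R H) * card (?C H)" using box[OF HG] .
  have C_box: "card (?G - H) \<le> card (?R (- H)) * card (?C (- H))"
  proof -
    have "?R (?G - H) = ?R (- H)" "?C (?G - H) = ?C (- H)"
      unfolding rows_meeting_def cols_meeting_def by auto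
    then show ?thesis using box[of "?G - H"] by simp
  qed
  have all_mixed: "card H \<le> ?b^2" if "{0..<U} \<subseteq> A" "A \<subseteq> {0..<U}" "card A \<le> ?b" for A
  proof -
    have "U \<le> ?b" using that by (metis card_atLeastLessThan diff_zero subset_antisym)
    moreover have "card H \<le> card ?G" using HG by (intro card_mono) auto
    ultimately show ?thesis using prod_le[of U U] by simp
  qed
  show ?thesis
  proof (cases rule: grid_line_cases[of U H])
    case 1
    then have "card H \<le> ?b^2" using H_box rows cols prod_le by (metis Int_absorb2 order_trans)
    then show ?thesis by simp
  next
    case 2
    then have "card (?G - H) \<le> ?b^2" using C_box rows cols prod_le by (metis Int_absorb1 order_trans)
    then show ?thesis by simp
  next
    case 3
    then have "card H \<le> ?b^2" by (rule all_mixed[OF _ _ cols]) (auto simp: cols_meeting_def)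
    then show ?thesis by simp
  next
    case 4
    then have "card H \<le> ?b^2" by (rule all_mixed[OF _ _ rows]) (auto simp: rows_meeting_def)
    then show ?thesis by simp
  qed
qed


subsection \<open>The stationary law is within a constant factor of uniform\<close>

text \<open>In lattice coordinates,
  Gamma(x) is the set of points of the box [0,N]^2 whose offset from x lies in a region K
  that is closed under shrinking the absolute values of the coordinates.  For any such K,
  the number of box points with offset in K varies by at most a factor 16 over the box:
  reflecting offsets into the first quadrant loses a factor at most 4, halving both
  coordinates loses another factor 4, and from every point of the box one can move
  N div 2 steps towards the centre in each coordinate.\<close>

definition shrink_closed :: "(real \<Rightarrow> real \<Rightarrow> bool) \<Rightarrow> bool" where
  "shrink_closed K \<longleftrightarrow> (\<forall>s t s' t'. K s t \<and> \<bar>s'\<bar> \<le> \<bar>s\<bar> \<and> \<bar>t'\<bar> \<le> \<bar>t\<bar> \<longrightarrow> K s' t')"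

definition offset_region :: "nat \<Rightarrow> (real \<Rightarrow> real \<Rightarrow> bool) \<Rightarrow> nat \<times> nat \<Rightarrow> (nat \<times> nat) set" where
  "offset_region N K x =
     {(a, b) \<in> {0..N} \<times> {0..N}. K (real (fst x) - real a) (real (snd x) - real b)}"

definition quadrant_region :: "nat \<Rightarrow> (real \<Rightarrow> real \<Rightarrow> bool) \<Rightarrow> (nat \<times> nat) set" where
  "quadrant_region N K = {(a, b) \<in> {0..N} \<times> {0..N}. K (real a) (real b)}"

lemma shrink_closedD:
  "shrink_closed K \<Longrightarrow> K s t \<Longrightarrow> \<bar>s'\<bar> \<le> \<bar>s\<bar> \<Longrightarrow> \<bar>t'\<bar> \<le> \<bar>t\<bar> \<Longrightarrow> K s' t'"
  unfolding shrink_closed_def by blast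

lemma finite_offset_region: "finite (offset_region N K x)"
  unfolding offset_region_def by (rule finite_subset[of _ "{0..N} \<times> {0..N}"]) auto

lemma finite_quadrant_region: "finite (quadrant_region N K)"
  unfolding quadrant_region_def by (rule finite_subset[of _ "{0..N} \<times> {0..N}"]) auto

lemma card_le_fibre_bound:
  assumes finB: "finite B" and fAB: "\<And>a. a \<in> A \<Longrightarrow> f a \<in> B"
    and fib: "\<And>b. b \<in> B \<Longrightarrow> card {a\<in>A. f a = b} \<le> k"
  shows "card A \<le> k * card B"
proof -
  have "A = (\<Union>b\<in>B. {a\<in>A. f a = b})" using fAB by auto
  then have "card A \<le> (\<Sum>b\<in>B. card {a\<in>A. f a = b})" using card_UN_le[OF finB] by metis
  also have "\<dots> \<le> (\<Sum>b\<in>B. k)" using fib by (intro sum_mono) auto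
  finally show ?thesis by (simp add: mult.commute)
qed

lemma card_two_by_two:
  "card ({a. a = a1 \<or> a = a2} \<times> {b. b = b1 \<or> b = b2}) \<le> 4"
proof -
  have "{a. a = a1 \<or> a = a2} = {a1, a2}" "{b. b = b1 \<or> b = b2} = {b1, b2}" by auto
  moreover have "card {a1, a2} \<le> 2" "card {b1, b2} \<le> 2" by (simp_all add: card_insert_le_m1)
  ultimately show ?thesis unfolding card_cartesian_product using mult_le_mono[of _ 2 _ 2] by simp
qed

definition nat_dist :: "nat \<Rightarrow> nat \<Rightarrow> nat" where
  "nat_dist a y = (if y \<le> a then a - y else y - a)"

lemma nat_dist_real: "real (nat_dist a y) = \<bar>real y - real a\<bar>"
  by (auto simp: nat_dist_def)

lemma nat_dist_eq: "nat_dist a y = u \<Longrightarrow> a = y + u \<or> a = y - u"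
  by (auto simp: nat_dist_def split: if_splits)

text \<open>Reflecting offsets into the first quadrant is at most 4-to-1.\<close>
lemma offset_region_le_quadrant:
  assumes K: "shrink_closed K" and y: "fst y \<le> N" "snd y \<le> N"
  shows "card (offset_region N K y) \<le> 4 * card (quadrant_region N K)"
proof (rule card_le_fibre_bound[OF finite_quadrant_region])
  let ?f = "\<lambda>(a, b). (nat_dist a (fst y), nat_dist b (snd y))"
  fix x assume "x \<in> offset_region N K y"
  then obtain a b where x: "x = (a, b)" "a \<le> N" "b \<le> N"
      "K (real (fst y) - real a) (real (snd y) - real b)"
    unfolding offset_region_def by auto
  have "K (real (nat_dist a (fst y))) (real (nat_dist b (snd y)))"
    by (rule shrink_closedD[OF K x(4)]) (simp_all add: nat_dist_real)
  moreover have "nat_dist a (fst y) \<le> N" "nat_dist b (snd y) \<le> N"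
    using x y by (auto simp: nat_dist_def)
  ultimately show "?f x \<in> quadrant_region N K" using x by (auto simp: quadrant_region_def)
next
  fix z assume "z \<in> quadrant_region N K"
  obtain u v where z: "z = (u, v)" by force
  let ?F = "{x \<in> offset_region N K y.
          (\<lambda>(a, b). (nat_dist a (fst y), nat_dist b (snd y))) x = z}"
  have "?F \<subseteq> {a. a = fst y + u \<or> a = fst y - u} \<times> {b. b = snd y + v \<or> b = snd y - v}"
  proof
    fix x assume "x \<in> ?F"
    then have d: "nat_dist (fst x) (fst y) = u" "nat_dist (snd x) (snd y) = v"
      using z by (auto split: prod.splits)
    have "fst x = fst y + u \<or> fst x = fst y - u" "snd x = snd y + v \<or> snd x = snd y - v"
      using nat_dist_eq[OF d(1)] nat_dist_eq[OF d(2)] by auto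
    then show "x \<in> {a. a = fst y + u \<or> a = fst y - u} \<times> {b. b = snd y + v \<or> b = snd y - v}"
      by (simp add: mem_Times_iff)
  qed
  then have "card ?F \<le> card ({a. a = fst y + u \<or> a = fst y - u} \<times> {b. b = snd y + v \<or> b = snd y - v})"
    by (intro card_mono) auto
  also have "\<dots> \<le> 4" by (rule card_two_by_two)
  finally show "card ?F \<le> 4" .
qed

text \<open>Halving both coordinates is at most 4-to-1.\<close>
lemma quadrant_le_half_quadrant:
  assumes K: "shrink_closed K"
  shows "card (quadrant_region N K) \<le> 4 * card (quadrant_region (N div 2) K)"
proof (rule card_le_fibre_bound[OF finite_quadrant_region])
  fix x assume "x \<in> quadrant_region N K"
  then obtain a b where x: "x = (a, b)" "a \<le> N" "b \<le> N" "K (real a) (real b)"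
    unfolding quadrant_region_def by auto
  have "K (real (a div 2)) (real (b div 2))" by (rule shrink_closedD[OF K x(4)]) auto
  moreover have "a div 2 \<le> N div 2" "b div 2 \<le> N div 2" using x by (auto intro: div_le_mono)
  ultimately show "(\<lambda>(a, b). (a div 2, b div 2)) x \<in> quadrant_region (N div 2) K"
    using x by (auto simp: quadrant_region_def)
next
  fix z assume "z \<in> quadrant_region (N div 2) K"
  obtain u v where z: "z = (u, v)" by force
  let ?F = "{x \<in> quadrant_region N K. (\<lambda>(a, b). (a div 2, b div 2)) x = z}"
  have "?F \<subseteq> {a. a = 2 * u \<or> a = 2 * u + 1} \<times> {b. b = 2 * v \<or> b = 2 * v + 1}"
    using z by auto
  then have "card ?F \<le> card ({a. a = 2 * u \<or> a = 2 * u + 1} \<times> {b. b = 2 * v \<or> b = 2 * v + 1})"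
    by (intro card_mono) auto
  also have "\<dots> \<le> 4" by (rule card_two_by_two)
  finally show "card ?F \<le> 4" .
qed

definition toward_centre :: "nat \<Rightarrow> nat \<Rightarrow> nat \<Rightarrow> nat" where
  "toward_centre N i a = (if i + N div 2 \<le> N then i + a else i - a)"

lemma toward_centre:
  assumes "i \<le> N" "a \<le> N div 2"
  shows "toward_centre N i a \<le> N" "\<bar>real i - real (toward_centre N i a)\<bar> = real a"
  using assms by (auto simp: toward_centre_def of_nat_diff)

lemma inj_toward_centre: "i \<le> N \<Longrightarrow> inj_on (toward_centre N i) {0..N div 2}"
  unfolding inj_on_def toward_centre_def by auto

text \<open>Every offset region contains a translate of the halved quadrant region.\<close>
lemma half_quadrant_le_offset_region:
  assumes K: "shrink_closed K" and x: "fst x \<le> N" "snd x \<le> N"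
  shows "card (quadrant_region (N div 2) K) \<le> card (offset_region N K x)"
proof (rule card_inj_on_le[where f = "\<lambda>(a, b). (toward_centre N (fst x) a, toward_centre N (snd x) b)"])
  let ?f = "\<lambda>(a, b). (toward_centre N (fst x) a, toward_centre N (snd x) b)"
  show "finite (offset_region N K x)" by (rule finite_offset_region)
  show "inj_on ?f (quadrant_region (N div 2) K)"
    using inj_toward_centre[OF x(1)] inj_toward_centre[OF x(2)]
    unfolding inj_on_def quadrant_region_def by auto
  show "?f ` quadrant_region (N div 2) K \<subseteq> offset_region N K x"
  proof clarify
    fix a b assume "(a, b) \<in> quadrant_region (N div 2) K"
    then have ab: "a \<le> N div 2" "b \<le> N div 2" "K (real a) (real b)"
      unfolding quadrant_region_def by auto
    note ca = toward_centre[OF x(1) ab(1)] and cb = toward_centre[OF x(2) ab(2)]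
    have "K (real (fst x) - real (toward_centre N (fst x) a))
            (real (snd x) - real (toward_centre N (snd x) b))"
      by (rule shrink_closedD[OF K ab(3)]) (use ca cb in auto)
    then show "(toward_centre N (fst x) a, toward_centre N (snd x) b) \<in> offset_region N K x"
      using ca cb unfolding offset_region_def by auto
  qed
qed

theorem offset_region_ratio:
  assumes K: "shrink_closed K" and "fst x \<le> N" "snd x \<le> N" and "fst y \<le> N" "snd y \<le> N"
  shows "card (offset_region N K y) \<le> 16 * card (offset_region N K x)"
  using offset_region_le_quadrant[OF K, of y N] quadrant_le_half_quadrant[OF K, of N]
    half_quadrant_le_offset_region[OF K, of x N] assms by linarith

definition lattice_pt :: "real \<Rightarrow> nat \<times> nat \<Rightarrow> real \<times> real" where
  "lattice_pt \<epsilon> x = (real (fst x) * \<epsilon>, real (snd x) * \<epsilon>)"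

lemma inj_lattice_pt: "\<epsilon> > 0 \<Longrightarrow> inj_on (lattice_pt \<epsilon>) A"
  unfolding inj_on_def lattice_pt_def by (auto simp: prod_eq_iff)

lemma lattice_as_image:
  assumes "\<epsilon> > 0"
  shows "lattice n \<epsilon> =
    lattice_pt \<epsilon> ` ({0..nat \<lfloor>sqrt (real n) / \<epsilon>\<rfloor>} \<times> {0..nat \<lfloor>sqrt (real n) / \<epsilon>\<rfloor>})"
proof -
  let ?N = "nat \<lfloor>sqrt (real n) / \<epsilon>\<rfloor>"
  have idx: "i \<le> ?N \<longleftrightarrow> real i \<le> sqrt (real n) / \<epsilon>" for i
    using assms by (simp add: le_nat_iff le_floor_iff)
  show ?thesis
    unfolding lattice_def lattice_pt_def idx[symmetric] by force
qed

lemma card_lattice: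
  "\<epsilon> > 0 \<Longrightarrow> card (lattice n \<epsilon>) = (nat \<lfloor>sqrt (real n) / \<epsilon>\<rfloor> + 1)^2"
  unfolding lattice_as_image
  by (subst card_image) (auto simp: inj_lattice_pt card_cartesian_product power2_eq_square)

lemma finite_lattice: "\<epsilon> > 0 \<Longrightarrow> finite (lattice n \<epsilon>)"
  unfolding lattice_as_image by auto

definition in_disc :: "real \<Rightarrow> real \<Rightarrow> real \<Rightarrow> real \<Rightarrow> bool" where
  "in_disc \<epsilon> r s t \<longleftrightarrow> sqrt ((s * \<epsilon>)^2 + (t * \<epsilon>)^2) \<le> r"

lemma shrink_closed_in_disc: "shrink_closed (in_disc \<epsilon> r)"
  unfolding shrink_closed_def in_disc_def
proof (intro allI impI, elim conjE)
  fix s t s' t' :: real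
  assume h: "sqrt ((s * \<epsilon>)\<^sup>2 + (t * \<epsilon>)\<^sup>2) \<le> r" "\<bar>s'\<bar> \<le> \<bar>s\<bar>" "\<bar>t'\<bar> \<le> \<bar>t\<bar>"
  have "s'^2 \<le> s^2" "t'^2 \<le> t^2" using h(2,3) by (simp_all add: abs_le_square_iff)
  then have "(s' * \<epsilon>)\<^sup>2 + (t' * \<epsilon>)\<^sup>2 \<le> (s * \<epsilon>)\<^sup>2 + (t * \<epsilon>)\<^sup>2"
    by (simp add: power_mult_distrib add_mono mult_right_mono)
  then show "sqrt ((s' * \<epsilon>)\<^sup>2 + (t' * \<epsilon>)\<^sup>2) \<le> r"
    using h(1) real_sqrt_le_mono order_trans by blast
qed

lemma Gamma_as_offset_region:
  assumes e: "\<epsilon> > 0"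
  shows "Gamma n \<epsilon> r (lattice_pt \<epsilon> x) =
    lattice_pt \<epsilon> ` offset_region (nat \<lfloor>sqrt (real n) / \<epsilon>\<rfloor>) (in_disc \<epsilon> r) x"
proof -
  let ?N = "nat \<lfloor>sqrt (real n) / \<epsilon>\<rfloor>"
  have dist: "eucl_dist (lattice_pt \<epsilon> x) (lattice_pt \<epsilon> y) \<le> r \<longleftrightarrow>
        in_disc \<epsilon> r (real (fst x) - real (fst y)) (real (snd x) - real (snd y))" for y
    unfolding eucl_dist_def lattice_pt_def in_disc_def by (simp add: left_diff_distrib)
  show ?thesis
  proof (intro set_eqI iffI)
    fix z assume "z \<in> Gamma n \<epsilon> r (lattice_pt \<epsilon> x)"
    then obtain y where "y \<in> {0..?N} \<times> {0..?N}" "z = lattice_pt \<epsilon> y"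
        "eucl_dist (lattice_pt \<epsilon> x) z \<le> r"
      unfolding Gamma_def lattice_as_image[OF e] by auto
    then show "z \<in> lattice_pt \<epsilon> ` offset_region ?N (in_disc \<epsilon> r) x"
      using dist[of y] unfolding offset_region_def by auto
  next
    fix z assume "z \<in> lattice_pt \<epsilon> ` offset_region ?N (in_disc \<epsilon> r) x"
    then obtain y where "y \<in> offset_region ?N (in_disc \<epsilon> r) x" "z = lattice_pt \<epsilon> y" by auto
    then show "z \<in> Gamma n \<epsilon> r (lattice_pt \<epsilon> x)"
      using dist[of y] unfolding Gamma_def lattice_as_image[OF e] offset_region_def by auto
  qed
qed

theorem Gamma_ratio:
  assumes e: "\<epsilon> > 0" and z: "z \<in> lattice n \<epsilon>" and z': "z' \<in> lattice n \<epsilon>"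
  shows "card (Gamma n \<epsilon> r z') \<le> 16 * card (Gamma n \<epsilon> r z)"
proof -
  let ?B = "{0..nat \<lfloor>sqrt (real n) / \<epsilon>\<rfloor>} \<times> {0..nat \<lfloor>sqrt (real n) / \<epsilon>\<rfloor>}"
  have card_Gamma: "card (Gamma n \<epsilon> r (lattice_pt \<epsilon> x)) =
      card (offset_region (nat \<lfloor>sqrt (real n) / \<epsilon>\<rfloor>) (in_disc \<epsilon> r) x)" if "x \<in> ?B" for x
    unfolding Gamma_as_offset_region[OF e] by (rule card_image[OF inj_lattice_pt[OF e]])
  obtain x y where "x \<in> ?B" "z = lattice_pt \<epsilon> x" "y \<in> ?B" "z' = lattice_pt \<epsilon> y"
    using z z' unfolding lattice_as_image[OF e] by auto
  then show ?thesis
    using offset_region_ratio[OF shrink_closed_in_disc, of x _ y \<epsilon> r] card_Gamma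
    by (auto simp: mem_Times_iff)
qed

lemma Gamma_nonempty:
  assumes e: "\<epsilon> > 0" and z: "z \<in> lattice n \<epsilon>" and r: "r \<ge> 0"
  shows "card (Gamma n \<epsilon> r z) \<ge> 1"
proof -
  have "z \<in> Gamma n \<epsilon> r z" using z r unfolding Gamma_def eucl_dist_def by auto
  moreover have "finite (Gamma n \<epsilon> r z)" unfolding Gamma_def using finite_lattice[OF e] by auto
  ultimately show ?thesis by (metis One_nat_def Suc_leI card_gt_0_iff empty_iff)
qed


subsection \<open>Expansion of graphs spread evenly over a grid of cells\<close>

locale cell_graph =
  fixes n U :: nat and c :: "nat \<Rightarrow> nat \<times> nat" and adj :: "nat \<Rightarrow> nat \<Rightarrow> bool"
    and m M :: real
  assumes cell_in_grid: "\<And>i. i < n \<Longrightarrow> c i \<in> {0..<U} \<times> {0..<U}"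
    and near_adj: "\<And>i j. i < n \<Longrightarrow> j < n \<Longrightarrow> i \<noteq> j \<Longrightarrow>
                         c i = c j \<or> grid_adj (c i) (c j) \<Longrightarrow> adj i j"
    and occ_lower: "\<And>g. g \<in> {0..<U} \<times> {0..<U} \<Longrightarrow> m \<le> real (card {i\<in>{0..<n}. c i = g})"
    and occ_upper: "\<And>g. g \<in> {0..<U} \<times> {0..<U} \<Longrightarrow> real (card {i\<in>{0..<n}. c i = g}) \<le> M"
    and m_pos: "m > 0"
begin

abbreviation cells :: "(nat \<times> nat) set" where
  "cells \<equiv> {0..<U} \<times> {0..<U}"

definition occ :: "nat set \<Rightarrow> nat \<times> nat \<Rightarrow> nat" where
  "occ A g = card {i\<in>A. c i = g}"

lemma finite_nodes: "A \<subseteq> {0..<n} \<Longrightarrow> finite A"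
  using finite_subset by blast

lemma occ_split: "I \<subseteq> {0..<n} \<Longrightarrow> occ {0..<n} g = occ I g + occ ({0..<n} - I) g"
proof -
  assume I: "I \<subseteq> {0..<n}"
  have "{i\<in>{0..<n}. c i = g} = {i\<in>I. c i = g} \<union> {i\<in>{0..<n} - I. c i = g}" using I by auto
  moreover have "card ({i\<in>I. c i = g} \<union> {i\<in>{0..<n} - I. c i = g})
      = card {i\<in>I. c i = g} + card {i\<in>{0..<n} - I. c i = g}"
    using finite_nodes[OF I] by (intro card_Un_disjoint) auto
  ultimately show ?thesis unfolding occ_def by simp
qed

lemma occ_le_card: "I \<subseteq> {0..<n} \<Longrightarrow> occ I g \<le> card I"
  unfolding occ_def using finite_nodes by (intro card_mono) auto

lemma occ_le_max:
  assumes "A \<subseteq> {0..<n}" "g \<in> cells"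
  shows "real (occ A g) \<le> M"
proof -
  have "occ A g \<le> occ {0..<n} g" unfolding occ_def using assms(1) by (intro card_mono) auto
  then show ?thesis using occ_upper[OF assms(2)] unfolding occ_def by linarith
qed

lemma sum_occ: "A \<subseteq> {0..<n} \<Longrightarrow> (\<Sum>g\<in>cells. occ A g) = card A"
proof -
  assume A: "A \<subseteq> {0..<n}"
  then have "A = (\<Union>g\<in>cells. {i\<in>A. c i = g})" using cell_in_grid by auto
  moreover have "card (\<Union>g\<in>cells. {i\<in>A. c i = g}) = (\<Sum>g\<in>cells. occ A g)"
    unfolding occ_def
  proof (rule card_UN_disjoint)
    show "\<forall>g\<in>cells. finite {i\<in>A. c i = g}" using finite_nodes[OF A] by simp
  qed auto
  ultimately show ?thesis by simp
qed

lemma neighbours_in_cells: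
  assumes I: "I \<subseteq> {0..<n}" and T: "finite T"
    and near: "\<And>d. d \<in> T \<Longrightarrow> \<exists>i\<in>I. c i = d \<or> grid_adj (c i) d"
  shows "(\<Sum>d\<in>T. occ ({0..<n} - I) d) \<le> card (nbhd n adj I)"
proof -
  let ?out = "{0..<n} - I"
  have sub: "(\<Union>d\<in>T. {j\<in>?out. c j = d}) \<subseteq> nbhd n adj I"
  proof
    fix j assume "j \<in> (\<Union>d\<in>T. {j\<in>?out. c j = d})"
    then have j: "c j \<in> T" "j \<in> ?out" by auto
    obtain i where i: "i \<in> I" "c i = c j \<or> grid_adj (c i) (c j)" using near[OF j(1)] by blast
    have "adj i j" using I i j by (intro near_adj) auto
    then show "j \<in> nbhd n adj I" using i \<open>j \<in> ?out\<close> unfolding nbhd_def by auto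
  qed
  have "(\<Sum>d\<in>T. occ ?out d) = card (\<Union>d\<in>T. {j\<in>?out. c j = d})"
    unfolding occ_def using T by (intro card_UN_disjoint[symmetric]) auto
  also have "\<dots> \<le> card (nbhd n adj I)" using sub by (intro card_mono) (auto simp: nbhd_def)
  finally show ?thesis .
qed

text \<open>Small sets: the other nodes in the cell of any node of I are neighbours.\<close>
lemma small_set_expansion:
  assumes I: "I \<subseteq> {0..<n}" and "I \<noteq> {}"
  shows "real (card (nbhd n adj I)) \<ge> m - real (card I)"
proof -
  obtain i0 where i0: "i0 \<in> I" using assms(2) by blast
  have "occ ({0..<n} - I) (c i0) \<le> card (nbhd n adj I)"
    using neighbours_in_cells[OF I, of "{c i0}"] i0 by auto
  moreover have "m \<le> real (occ {0..<n} (c i0))"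
    using occ_lower[OF cell_in_grid[of i0]] i0 I unfolding occ_def by auto
  ultimately show ?thesis using occ_split[OF I, of "c i0"] occ_le_card[OF I, of "c i0"] by linarith
qed

definition heavy :: "nat set \<Rightarrow> (nat \<times> nat) set" where
  "heavy I = {g\<in>cells. 3 * occ {0..<n} g \<le> 4 * occ I g}"

text \<open>In a cell that is not heavy, the outsiders outnumber a third of the insiders,
  so the nodes of I in non-heavy cells have at least a third as many neighbours.\<close>
lemma light_cells_bound:
  assumes I: "I \<subseteq> {0..<n}"
  shows "(\<Sum>g\<in>cells - heavy I. occ I g) \<le> 3 * card (nbhd n adj I)"
proof -
  let ?T = "{g\<in>cells - heavy I. occ I g > 0}" and ?out = "{0..<n} - I"
  have light: "occ I g \<le> 3 * occ ?out g" if "g \<in> ?T" for g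
  proof -
    have "\<not> 3 * occ {0..<n} g \<le> 4 * occ I g" using that by (simp add: heavy_def)
    then show ?thesis unfolding occ_split[OF I, of g] by simp
  qed
  have occupied: "\<exists>i\<in>I. c i = d \<or> grid_adj (c i) d" if "d \<in> ?T" for d
  proof -
    have "{i\<in>I. c i = d} \<noteq> {}" using that by (auto simp: occ_def card_gt_0_iff)
    then show ?thesis by blast
  qed
  have nbhd: "(\<Sum>g\<in>?T. occ ?out g) \<le> card (nbhd n adj I)"
  proof (rule neighbours_in_cells[OF I])
    show "finite ?T" by simp
  qed (rule occupied)
  have "(\<Sum>g\<in>cells - heavy I. occ I g) = (\<Sum>g\<in>?T. occ I g)"
    by (rule sum.mono_neutral_right) auto
  also have "\<dots> \<le> (\<Sum>g\<in>?T. 3 * occ ?out g)" by (rule sum_mono) (rule light)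
  also have "\<dots> = 3 * (\<Sum>g\<in>?T. occ ?out g)" by (simp add: sum_distrib_left)
  also have "\<dots> \<le> 3 * card (nbhd n adj I)" using nbhd by simp
  finally show ?thesis .
qed

lemma heavy_cells_bound:
  assumes I: "I \<subseteq> {0..<n}" and half: "2 * card I \<le> n"
    and most: "card I \<le> 2 * (\<Sum>g\<in>heavy I. occ I g)"
  shows "real (card I) \<le> 2 * M * real (card (heavy I))"
    and "real (card I) \<le> 2 * M * real (card (cells - heavy I))"
proof -
  let ?H = "heavy I" and ?k = "card I"
  have HG: "?H \<subseteq> cells" by (auto simp: heavy_def)
  have "real (\<Sum>g\<in>?H. occ I g) \<le> (\<Sum>g\<in>?H. M)"
    unfolding of_nat_sum using occ_le_max[OF I] HG by (intro sum_mono) auto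
  moreover have "real ?k \<le> 2 * real (\<Sum>g\<in>?H. occ I g)"
    using most by (metis of_nat_le_iff of_nat_mult of_nat_numeral)
  ultimately have "real ?k \<le> 2 * (real (card ?H) * M)" by simp
  then show "real ?k \<le> 2 * M * real (card ?H)" by (simp add: algebra_simps)
  have "3 * (\<Sum>g\<in>?H. occ {0..<n} g) \<le> 4 * (\<Sum>g\<in>?H. occ I g)"
    unfolding sum_distrib_left by (intro sum_mono) (auto simp: heavy_def)
  also have "(\<Sum>g\<in>?H. occ I g) \<le> ?k"
    using sum_mono2[of cells ?H "occ I"] sum_occ[OF I] HG by simp
  finally have heavy_part: "3 * (\<Sum>g\<in>?H. occ {0..<n} g) \<le> 4 * ?k" by simp
  have "n = (\<Sum>g\<in>?H. occ {0..<n} g) + (\<Sum>g\<in>cells - ?H. occ {0..<n} g)"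
    using sum_occ[of "{0..<n}"] sum.subset_diff[OF HG, of "occ {0..<n}"] by simp
  then have "real n = real (\<Sum>g\<in>?H. occ {0..<n} g) + real (\<Sum>g\<in>cells - ?H. occ {0..<n} g)"
    by (metis of_nat_add)
  moreover have "real (\<Sum>g\<in>cells - ?H. occ {0..<n} g) \<le> real (card (cells - ?H)) * M"
    unfolding of_nat_sum using sum_mono[of "cells - ?H" "\<lambda>g. real (occ {0..<n} g)" "\<lambda>_. M"]
      occ_le_max[of "{0..<n}"] by auto
  moreover have "3 * real (\<Sum>g\<in>?H. occ {0..<n} g) \<le> 4 * real ?k"
    using heavy_part by (metis of_nat_le_iff of_nat_mult of_nat_numeral)
  moreover have "2 * real ?k \<le> real n" using half by (metis of_nat_le_iff of_nat_mult of_nat_numeral)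
  ultimately have "real ?k \<le> 2 * (real (card (cells - ?H)) * M)" by linarith
  then show "real ?k \<le> 2 * M * real (card (cells - ?H))" by (simp add: algebra_simps)
qed

text \<open>Every boundary cell of the heavy cells is not heavy, hence holds at least m/4 outsiders,
  all of them neighbours of I.\<close>
lemma boundary_cells_bound:
  assumes I: "I \<subseteq> {0..<n}"
  shows "m / 4 * real (card (grid_boundary U (heavy I))) \<le> real (card (nbhd n adj I))"
proof -
  let ?B = "grid_boundary U (heavy I)" and ?out = "{0..<n} - I"
  have outsiders: "m / 4 \<le> real (occ ?out d)" if "d \<in> ?B" for d
  proof -
    have "d \<in> cells" "d \<notin> heavy I" using that unfolding grid_boundary_def by auto
    then have "occ {0..<n} d < 4 * occ ?out d" using occ_split[OF I, of d] by (simp add: heavy_def)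
    moreover have "m \<le> real (occ {0..<n} d)" using occ_lower \<open>d \<in> cells\<close> by (simp add: occ_def)
    ultimately show ?thesis by linarith
  qed
  have "(\<Sum>d\<in>?B. occ ?out d) \<le> card (nbhd n adj I)"
  proof (rule neighbours_in_cells[OF I finite_grid_boundary])
    fix d assume "d \<in> ?B"
    then obtain g where g: "g \<in> heavy I" "grid_adj g d" unfolding grid_boundary_def by auto
    have "m \<le> real (occ {0..<n} g)" using g occ_lower by (simp add: heavy_def occ_def)
    then have "occ I g > 0" using g(1) m_pos unfolding heavy_def by auto
    then obtain i where "i \<in> I" "c i = g" by (auto simp: occ_def card_gt_0_iff)
    then show "\<exists>i\<in>I. c i = d \<or> grid_adj (c i) d" using g by blast
  qed
  then have "real (\<Sum>d\<in>?B. occ ?out d) \<le> real (card (nbhd n adj I))"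
    by (simp only: of_nat_le_iff)
  moreover have "(\<Sum>d\<in>?B. m / 4) \<le> (\<Sum>d\<in>?B. real (occ ?out d))"
    by (rule sum_mono) (rule outsiders)
  moreover have "m / 4 * real (card ?B) = (\<Sum>d\<in>?B. m / 4)" by simp
  ultimately show ?thesis unfolding of_nat_sum by linarith
qed

text \<open>Large sets: either a constant fraction of I lies in non-heavy cells, or the heavy
  cells form a set whose grid boundary is large by isoperimetry.\<close>
lemma large_set_expansion:
  assumes I: "I \<subseteq> {0..<n}" and half: "2 * card I \<le> n"
  shows "6 * real (card (nbhd n adj I)) \<ge> real (card I) \<or>
         32 * M * real (card (nbhd n adj I))^2 \<ge> m^2 * real (card I)"
proof -
  let ?N = "real (card (nbhd n adj I))" and ?k = "card I" and ?H = "heavy I"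
  let ?b = "real (card (grid_boundary U ?H))"
  have HG: "?H \<subseteq> cells" by (auto simp: heavy_def)
  have split: "?k = (\<Sum>g\<in>?H. occ I g) + (\<Sum>g\<in>cells - ?H. occ I g)"
    using sum_occ[OF I] sum.subset_diff[OF HG, of "occ I"] by simp
  show ?thesis
  proof (cases "?k \<le> 2 * (\<Sum>g\<in>?H. occ I g) \<and> ?k > 0")
    case False
    then show ?thesis using split light_cells_bound[OF I] by linarith
  next
    case True
    note heavy = heavy_cells_bound[OF I half conjunct1[OF True]]
    have "(\<Sum>g\<in>?H. occ I g) > 0" using True by linarith
    then obtain g where "g \<in> ?H" by (metis ex_in_conv less_irrefl sum.empty)
    then have "m \<le> M" using occ_lower occ_upper HG by force
    then have M0: "M \<ge> 0" using m_pos by linarith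
    have "real ?k \<le> 2 * M * real (min (card ?H) (card (cells - ?H)))"
      using heavy by (cases "card ?H \<le> card (cells - ?H)") (auto simp: min_def)
    also have "\<dots> \<le> 2 * M * ?b^2"
      using grid_isoperimetry[OF HG] M0 by (intro mult_left_mono) (simp_all add: of_nat_le_iff
          flip: of_nat_power)
    finally have "real ?k \<le> 2 * M * ?b^2" .
    then have "m^2 * real ?k \<le> m^2 * (2 * M * ?b^2)" by (rule mult_left_mono) simp
    also have "\<dots> = 32 * M * (m / 4 * ?b)^2" by (simp add: power_mult_distrib power_divide)
    also have "\<dots> \<le> 32 * M * ?N^2"
      using boundary_cells_bound[OF I] m_pos M0 by (intro mult_left_mono power_mono) auto
    finally show ?thesis by simp
  qed
qed

end

text \<open>The two expansion estimates above, specialised to the occupancy bounds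
  R^2/25600 and 9 R^2 that hold with high probability, give the expander properties
  with alpha = 1/51200 and beta = 10^-9.\<close>

text \<open>Small sets: |N(I)| \<ge> R^2/25600 - |I| \<ge> R^2/51200 when |I| \<le> R^2/51200.\<close>
lemma small_set_arith:
  fixes R h k N :: real
  assumes "h \<ge> 1" "h \<le> R^2 / 51200" "k \<le> h" "k \<ge> 0" "k > 0 \<Longrightarrow> N \<ge> R^2/25600 - k" "N \<ge> 0"
  shows "N \<ge> (1/51200) * R^2 / h * k"
proof (cases "k > 0")
  case False
  then show ?thesis using assms by simp
next
  case True
  have "R^2 * (k / h) \<le> R^2 * 1" using assms by (intro mult_left_mono) auto
  then have "(1/51200) * R^2 / h * k \<le> (1/51200) * R^2" by (simp add: field_simps)
  also have "\<dots> \<le> N" using assms True by simp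
  finally show ?thesis .
qed

text \<open>For large sets the two alternatives of large_set_expansion (and, for |I| below
  R^2/51200, the small-set bound) all give N^2 \<ge> 10^-18 R^2 |I|.\<close>
lemma large_set_square_bound:
  fixes R k N :: real
  assumes R: "R > 0" and k: "k > 0" and N: "N \<ge> 0"
    and small: "N \<ge> R^2/25600 - k"
    and large: "k > R^2/51200 \<Longrightarrow> 6 * N \<ge> k \<or> 32 * (9 * R^2) * N^2 \<ge> (R^2/25600)^2 * k"
  shows "(1/10^18) * R^2 * k \<le> N^2"
proof (cases "k \<le> R^2/51200")
  case True
  have "(1/10^18) * R^2 * k \<le> (1/10^18) * R^2 * (R^2/51200)"
    using True by (intro mult_left_mono) auto
  also have "\<dots> \<le> (R^2/51200)^2" using R by (simp add: power2_eq_square field_simps)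
  also have "\<dots> \<le> N^2" using small True by (intro power_mono) auto
  finally show ?thesis .
next
  case False
  then have "6 * N \<ge> k \<or> 32 * (9 * R^2) * N^2 \<ge> (R^2/25600)^2 * k"
    using large by simp
  then show ?thesis
  proof
    assume "6 * N \<ge> k"
    then have "(k/6)^2 \<le> N^2" using k by (intro power_mono) auto
    moreover have "(1/10^18) * R^2 * k \<le> k / 36 * k"
      using False k by (intro mult_right_mono) auto
    ultimately show ?thesis by (simp add: power2_eq_square)
  next
    assume "32 * (9 * R^2) * N^2 \<ge> (R^2/25600)^2 * k"
    moreover define x where "x = R^2"
    ultimately have a: "32 * (9 * x) * N^2 \<ge> (x/25600)^2 * k" by simp
    have "(x/25600)^2 * k = x * (x * k / 655360000)" by (simp add: power2_eq_square)
    moreover have "32 * (9 * x) * N^2 = x * (288 * N^2)" by simp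
    ultimately have "x * (x * k / 655360000) \<le> x * (288 * N^2)" using a by (simp only:)
    moreover have "x > 0" unfolding x_def using R by simp
    ultimately have "288 * N^2 \<ge> R^2 * k / 655360000"
      unfolding x_def by (simp only: mult_le_cancel_left_pos)
    then have "N^2 \<ge> R^2 * k / 188743680000" by simp
    moreover have "(1/10^18) * R^2 * k \<le> R^2 * k / 188743680000" using k by simp
    ultimately show ?thesis by linarith
  qed
qed

lemma large_set_arith:
  fixes R h k N :: real
  assumes R: "R > 0" and h: "h \<ge> R^2 / 51200" "k \<le> h" "k \<ge> 0"
    and small: "k > 0 \<Longrightarrow> N \<ge> R^2/25600 - k"
    and large: "k > R^2/51200 \<Longrightarrow> 6 * N \<ge> k \<or> 32 * (9 * R^2) * N^2 \<ge> (R^2/25600)^2 * k"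
    and N: "N \<ge> 0"
  shows "N \<ge> (1/10^9) * R / sqrt h * k"
proof (cases "k > 0")
  case False
  then show ?thesis using h N by simp
next
  case True
  have hpos: "h > 0" using True h by linarith
  define q where "q = (1/10^9) * R / sqrt h * k"
  have "q^2 = (1/10^18) * R^2 * (k * (k / h))" unfolding q_def using hpos
    by (simp add: power_divide power_mult_distrib field_simps power2_eq_square)
  also have "\<dots> \<le> (1/10^18) * R^2 * (k * 1)"
    using h hpos True by (intro mult_left_mono) (auto simp: field_simps)
  also have "\<dots> \<le> N^2" using large_set_square_bound[OF R True N small[OF True] large] by simp
  finally have "q^2 \<le> N^2" .
  moreover have "q \<ge> 0" unfolding q_def using R h by simp
  ultimately have "q \<le> N" using N by (meson power2_le_imp_le)
  then show ?thesis unfolding q_def .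
qed

context cell_graph
begin

theorem expander_properties:
  assumes R: "R > 0" and m: "m = R^2/25600" and M: "M = 9 * R^2"
  shows "(\<forall>h::nat. 1 \<le> h \<and> real h \<le> (1/51200) * R^2 \<longrightarrow>
            is_expander n adj h ((1/51200) * R^2 / real h)) \<and>
         (\<forall>h::nat. (1/51200) * R^2 \<le> real h \<and> real h \<le> real n / 2 \<longrightarrow>
            is_expander n adj h ((1/10^9) * R / sqrt (real h)))"
proof -
  have small: "real (card I) > 0 \<Longrightarrow> R^2/25600 - real (card I) \<le> real (card (nbhd n adj I))"
    if "I \<subseteq> {0..<n}" for I
    using small_set_expansion[OF that] m by (metis card.empty of_nat_0 order_less_irrefl)
  show ?thesis
  proof (intro conjI allI impI)
    fix h :: nat
    assume h: "1 \<le> h \<and> real h \<le> (1/51200) * R^2"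
    show "is_expander n adj h ((1/51200) * R^2 / real h)"
      unfolding is_expander_def
    proof (intro allI impI)
      fix I assume I: "I \<subseteq> {0..<n}" "card I \<le> h"
      show "(1/51200) * R^2 / real h * real (card I) \<le> real (card (nbhd n adj I))"
        by (rule small_set_arith) (use h I small[OF I(1)] in auto)
    qed
  next
    fix h :: nat
    assume h: "(1/51200) * R^2 \<le> real h \<and> real h \<le> real n / 2"
    show "is_expander n adj h ((1/10^9) * R / sqrt (real h))"
      unfolding is_expander_def
    proof (intro allI impI)
      fix I assume I: "I \<subseteq> {0..<n}" "card I \<le> h"
      have half: "2 * card I \<le> n" using I(2) h by linarith
      have large: "6 * real (card (nbhd n adj I)) \<ge> real (card I) \<or>
          32 * (9 * R^2) * real (card (nbhd n adj I))^2 \<ge> (R^2/25600)^2 * real (card I)"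
        using large_set_expansion[OF I(1) half] unfolding m M .
      show "(1/10^9) * R / sqrt (real h) * real (card I) \<le> real (card (nbhd n adj I))"
      proof (rule large_set_arith[OF R _ _ _ small[OF I(1)]])
        show "real h \<ge> R^2 / 51200" using h by linarith
        show "real (card I) \<le> real h" using I(2) by simp
        show "real (card I) > R^2 / 51200 \<Longrightarrow> 6 * real (card (nbhd n adj I)) \<ge> real (card I) \<or>
          32 * (9 * R^2) * real (card (nbhd n adj I))^2 \<ge> (R^2/25600)^2 * real (card I)"
          using large by blast
        show "0 \<le> real (card I)" "0 \<le> real (card (nbhd n adj I))" by simp_all
      qed
    qed
  qed
qed

end


subsection \<open>The partition of the lattice into cells\<close>

text \<open>Lattice indices run over
  {0..side}; they are grouped into ncells consecutive strips of width ``width'' (the last strip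
  absorbs the remainder), where width * eps is between R/10 and R/5.  A cell is a product of
  two strips; points in equal or adjacent cells are within distance R of each other.\<close>

locale meg_setup =
  fixes n :: nat and \<epsilon> r R :: real
  assumes e0: "\<epsilon> > 0" and e1: "\<epsilon> \<le> 1" and r0: "r \<ge> 0" and R10: "R \<ge> 10"
    and Rn: "R \<le> sqrt (real n)"
begin

definition side :: nat where "side = nat \<lfloor>sqrt (real n) / \<epsilon>\<rfloor>"
definition width :: nat where "width = nat \<lfloor>R / (5 * \<epsilon>)\<rfloor>"
definition ncells :: nat where "ncells = (side + 1) div width"
definition cell_index :: "nat \<Rightarrow> nat" where "cell_index i = min (i div width) (ncells - 1)"
definition cell :: "real \<times> real \<Rightarrow> nat \<times> nat" where
  "cell z = (cell_index (nat \<lfloor>fst z / \<epsilon>\<rfloor>), cell_index (nat \<lfloor>snd z / \<epsilon>\<rfloor>))"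

abbreviation Lat :: "(real \<times> real) set" where "Lat \<equiv> lattice n \<epsilon>"

abbreviation w :: "real \<times> real \<Rightarrow> real" where "w \<equiv> stat_pi n \<epsilon> r"

lemma scaled_side_ge: "sqrt (real n) / \<epsilon> \<ge> 10"
proof -
  have "\<epsilon> * sqrt (real n) \<le> 1 * sqrt (real n)" using e1 by (intro mult_right_mono) auto
  then have "sqrt (real n) / \<epsilon> \<ge> sqrt (real n)" using e0 by (simp add: field_simps)
  then show ?thesis using R10 Rn by linarith
qed

lemma side_bounds: "real side \<le> sqrt (real n) / \<epsilon>" "sqrt (real n) / \<epsilon> < real side + 1"
  unfolding side_def using scaled_side_ge by linarith+

lemma side_times_eps:
  "sqrt (real n) < (real side + 1) * \<epsilon>" "(real side + 1) * \<epsilon> \<le> 2 * sqrt (real n)"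
  using side_bounds scaled_side_ge e0 by (simp_all add: field_simps)

lemma width_bounds: "width \<ge> 1" "real width * \<epsilon> \<le> R / 5" "real width * \<epsilon> \<ge> R / 10"
proof -
  have a: "R / (5 * \<epsilon>) \<ge> 2" using R10 e0 e1 by (simp add: field_simps)
  have b: "real width \<le> R / (5 * \<epsilon>)" "R / (5 * \<epsilon>) < real width + 1"
    unfolding width_def using a by linarith+
  then show "width \<ge> 1" using a by linarith
  show "real width * \<epsilon> \<le> R / 5" using b(1) e0 by (simp add: field_simps)
  have "R / (10 * \<epsilon>) \<ge> 1" using R10 e0 e1 by (simp add: field_simps)
  then have "real width \<ge> R / (10 * \<epsilon>)" using b(2) by (simp add: field_simps)
  then show "real width * \<epsilon> \<ge> R / 10" using e0 by (simp add: field_simps)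
qed

lemma ncells_pos: "ncells \<ge> 1"
proof -
  have "real width * \<epsilon> \<le> R" using width_bounds by linarith
  then have "real width \<le> R / \<epsilon>" using e0 by (simp add: field_simps)
  also have "\<dots> \<le> sqrt (real n) / \<epsilon>" using Rn e0 by (simp add: divide_right_mono)
  finally have "width \<le> side + 1" using side_bounds by linarith
  then show ?thesis
    unfolding ncells_def using width_bounds(1) div_greater_zero_iff[of "side + 1" width] by simp
qed

lemma cell_index_bounds:
  assumes "i \<le> side"
  shows "cell_index i < ncells" "cell_index i * width \<le> i" "i < (cell_index i + 2) * width"
proof -
  have b: "width > 0" using width_bounds by simp
  have d1: "(i div width) * width \<le> i" by simp
  have d2: "i < (i div width + 1) * width" using dividend_less_div_times[OF b, of i] by simp
  have last: "side + 1 < (ncells + 1) * width"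
    unfolding ncells_def using dividend_less_div_times[OF b, of "side + 1"] by simp
  show "cell_index i < ncells" unfolding cell_index_def using ncells_pos by simp
  show "cell_index i * width \<le> i"
    unfolding cell_index_def using d1 by (meson le_trans min.cobounded1 mult_le_mono1)
  show "i < (cell_index i + 2) * width"
  proof (cases "i div width \<le> ncells - 1")
    case True
    then show ?thesis using d2 unfolding cell_index_def by (simp add: algebra_simps)
  next
    case False
    then have "cell_index i + 2 = ncells + 1" unfolding cell_index_def using ncells_pos by simp
    then show ?thesis using last assms by simp
  qed
qed

lemma cell_lattice_pt: "cell (lattice_pt \<epsilon> (i, j)) = (cell_index i, cell_index j)"
  unfolding cell_def lattice_pt_def using e0 by simp

lemma Lat_eq: "Lat = lattice_pt \<epsilon> ` ({0..side} \<times> {0..side})"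
  unfolding side_def by (rule lattice_as_image[OF e0])

lemma finite_Lat: "finite Lat"
  by (rule finite_lattice[OF e0])

lemma cell_in_grid_Lat: "z \<in> Lat \<Longrightarrow> cell z \<in> {0..<ncells} \<times> {0..<ncells}"
  unfolding Lat_eq using cell_index_bounds(1) by (auto simp: cell_lattice_pt)

lemma cell_index_close:
  assumes "a \<le> side" "a' \<le> side" "cell_index a \<le> cell_index a' + 1"
  shows "real a - real a' \<le> 3 * real width"
proof -
  have "a < (cell_index a + 2) * width" "cell_index a' * width \<le> a'"
    using cell_index_bounds assms by auto
  moreover have "(cell_index a + 2) * width \<le> cell_index a' * width + 3 * width"
    using mult_le_mono1[OF assms(3), of width] by (simp add: algebra_simps)
  ultimately show ?thesis by linarith
qed

lemma adjacent_cells_close: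
  assumes z: "z \<in> Lat" and z': "z' \<in> Lat"
    and u: "fst (cell z) \<le> fst (cell z') + 1" "fst (cell z') \<le> fst (cell z) + 1"
    and v: "snd (cell z) \<le> snd (cell z') + 1" "snd (cell z') \<le> snd (cell z) + 1"
  shows "eucl_dist z z' \<le> R"
proof -
  obtain i j i' j' where ij: "i \<le> side" "j \<le> side" "z = lattice_pt \<epsilon> (i, j)"
    and ij': "i' \<le> side" "j' \<le> side" "z' = lattice_pt \<epsilon> (i', j')"
    using z z' unfolding Lat_eq by auto
  have coord: "((real a - real a') * \<epsilon>)^2 \<le> (3 * R / 5)^2"
    if "\<bar>real a - real a'\<bar> \<le> 3 * real width" for a a' :: nat
  proof -
    have "\<bar>(real a - real a') * \<epsilon>\<bar> \<le> 3 * real width * \<epsilon>"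
      using that e0 by (simp add: abs_mult mult_right_mono)
    also have "\<dots> \<le> 3 * R / 5" using width_bounds(2) by linarith
    also have "\<dots> = \<bar>3 * R / 5\<bar>" using R10 by simp
    finally show ?thesis by (rule abs_le_square_iff[THEN iffD1])
  qed
  have "((real i - real i') * \<epsilon>)^2 \<le> (3 * R / 5)^2" "((real j - real j') * \<epsilon>)^2 \<le> (3 * R / 5)^2"
    using coord cell_index_close u v ij ij' by (simp_all add: cell_lattice_pt abs_le_iff)
  moreover have "(3 * R / 5)^2 = 9 / 25 * R^2" by (simp add: power_divide power_mult_distrib)
  ultimately have "((real i - real i') * \<epsilon>)^2 + ((real j - real j') * \<epsilon>)^2 \<le> R^2"
    using zero_le_power2[of R] by linarith
  then have "sqrt (((real i - real i') * \<epsilon>)^2 + ((real j - real j') * \<epsilon>)^2) \<le> R"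
    using R10 real_sqrt_le_mono by fastforce
  then show ?thesis unfolding ij(3) ij'(3) eucl_dist_def lattice_pt_def by (simp add: left_diff_distrib)
qed

lemma ncells_sq: "real (ncells^2) \<le> 4 * real n"
proof -
  have "ncells * width \<le> side + 1" unfolding ncells_def by simp
  then have "real ncells * (real width * \<epsilon>) \<le> (real side + 1) * \<epsilon>"
    using e0 by (metis mult.assoc of_nat_1 of_nat_add of_nat_le_iff of_nat_mult mult_right_mono less_imp_le)
  also have "\<dots> \<le> 2 * sqrt (real n)" by (rule side_times_eps(2))
  finally have "real ncells * (real width * \<epsilon>) \<le> 2 * sqrt (real n)" .
  moreover have "real ncells * 1 \<le> real ncells * (real width * \<epsilon>)"
    using width_bounds(3) R10 by (intro mult_left_mono) auto
  ultimately have "real ncells \<le> 2 * sqrt (real n)" by simp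
  then have "real ncells ^ 2 \<le> (2 * sqrt (real n))^2" by (intro power_mono) auto
  then show ?thesis by (simp add: power_mult_distrib)
qed

definition cell_strip :: "nat \<Rightarrow> nat set" where
  "cell_strip u = {i\<in>{0..side}. cell_index i = u}"

lemma card_cell_strip:
  assumes "u < ncells"
  shows "width \<le> card (cell_strip u)" "card (cell_strip u) \<le> 2 * width"
proof -
  have b: "width > 0" using width_bounds by simp
  have "{u * width..<u * width + width} \<subseteq> cell_strip u"
  proof
    fix i assume i: "i \<in> {u * width..<u * width + width}"
    have "i div width = u" using i b by (simp add: div_nat_eqI algebra_simps)
    moreover have "u * width + width \<le> ncells * width"
      using mult_le_mono1[of "u + 1" ncells width] assms by (simp add: algebra_simps)
    moreover have "ncells * width \<le> side + 1" unfolding ncells_def by simp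
    ultimately show "i \<in> cell_strip u" using i assms unfolding cell_strip_def cell_index_def by auto
  qed
  then have "card {u * width..<u * width + width} \<le> card (cell_strip u)"
    by (intro card_mono) (auto simp: cell_strip_def)
  then show "width \<le> card (cell_strip u)" by simp
  have "cell_strip u \<subseteq> {u * width..<(u + 2) * width}"
    using cell_index_bounds(2,3) unfolding cell_strip_def by fastforce
  then have "card (cell_strip u) \<le> card {u * width..<(u + 2) * width}" by (intro card_mono) auto
  then show "card (cell_strip u) \<le> 2 * width" by (simp add: algebra_simps)
qed

lemma cell_points_eq: "{z\<in>Lat. cell z = (u, v)} = lattice_pt \<epsilon> ` (cell_strip u \<times> cell_strip v)"
  unfolding Lat_eq cell_strip_def by (auto simp: cell_lattice_pt)

lemma card_cell_points_bounds:
  assumes "g \<in> {0..<ncells} \<times> {0..<ncells}"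
  shows "real width ^ 2 \<le> real (card {z\<in>Lat. cell z = g})"
    "real (card {z\<in>Lat. cell z = g}) \<le> 4 * real width ^ 2"
proof -
  obtain u v where uv: "g = (u, v)" "u < ncells" "v < ncells" using assms by auto
  have card: "card {z\<in>Lat. cell z = g} = card (cell_strip u) * card (cell_strip v)"
    unfolding uv(1) cell_points_eq
    by (subst card_image) (auto simp: inj_lattice_pt[OF e0] card_cartesian_product)
  have "width * width \<le> card (cell_strip u) * card (cell_strip v)"
    using card_cell_strip(1)[OF uv(2)] card_cell_strip(1)[OF uv(3)] by (rule mult_le_mono)
  then show "real width ^ 2 \<le> real (card {z\<in>Lat. cell z = g})"
    unfolding card power2_eq_square by (simp only: of_nat_mult[symmetric] of_nat_le_iff)
  have "card (cell_strip u) * card (cell_strip v) \<le> (2 * width) * (2 * width)"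
    using card_cell_strip(2)[OF uv(2)] card_cell_strip(2)[OF uv(3)] by (rule mult_le_mono)
  then show "real (card {z\<in>Lat. cell z = g}) \<le> 4 * real width ^ 2"
    unfolding card power2_eq_square by (simp only: of_nat_le_iff flip: of_nat_mult)
qed

end

subsection \<open>Each cell has probability about R^2 / n\<close>

context meg_setup
begin

text \<open>By the factor-16 comparison of the |Gamma(z)|, the stationary law w is within a
  factor 16 of the uniform law on the lattice.\<close>

definition gam :: "real \<times> real \<Rightarrow> real" where "gam z = real (card (Gamma n \<epsilon> r z))"
definition gam_total :: real where "gam_total = (\<Sum>y\<in>Lat. gam y)"
definition Lat_size :: real where "Lat_size = real (card Lat)"

lemma stat_pi_eq: "w z = gam z / gam_total"
  unfolding stat_pi_def gam_def gam_total_def by simp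

lemma Lat_size_eq: "Lat_size = (real side + 1)^2"
  unfolding Lat_size_def side_def card_lattice[OF e0] by simp

lemma Lat_size_pos: "Lat_size > 0"
  unfolding Lat_size_eq by simp

lemma gam_ratio: "z \<in> Lat \<Longrightarrow> y \<in> Lat \<Longrightarrow> gam y \<le> 16 * gam z"
  unfolding gam_def using Gamma_ratio[OF e0] by (metis of_nat_le_iff of_nat_mult of_nat_numeral)

lemma gam_ge_1: "z \<in> Lat \<Longrightarrow> gam z \<ge> 1"
  unfolding gam_def using Gamma_nonempty[OF e0 _ r0] by simp

lemma gam_total_bounds:
  assumes "z \<in> Lat"
  shows "gam_total \<le> 16 * Lat_size * gam z" "Lat_size * gam z \<le> 16 * gam_total"
proof -
  have "gam_total \<le> (\<Sum>y\<in>Lat. 16 * gam z)"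
    unfolding gam_total_def using gam_ratio[OF assms] by (intro sum_mono) auto
  then show "gam_total \<le> 16 * Lat_size * gam z" unfolding Lat_size_def by (simp add: algebra_simps)
  have "(\<Sum>y\<in>Lat. gam z) \<le> (\<Sum>y\<in>Lat. 16 * gam y)"
    using gam_ratio[OF _ assms] by (intro sum_mono) auto
  then show "Lat_size * gam z \<le> 16 * gam_total"
    unfolding Lat_size_def gam_total_def by (simp add: sum_distrib_left)
qed

lemma gam_total_pos: "gam_total > 0"
proof -
  have z: "lattice_pt \<epsilon> (0, 0) \<in> Lat" unfolding Lat_eq by auto
  have "0 < Lat_size * gam (lattice_pt \<epsilon> (0, 0))"
    using Lat_size_pos gam_ge_1[OF z] by simp
  then show ?thesis using gam_total_bounds(2)[OF z] by linarith
qed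

lemma stat_pi_nonneg: "w z \<ge> 0"
  unfolding stat_pi_eq gam_def using gam_total_pos by simp

lemma stat_pi_sum: "sum w Lat = 1"
  unfolding stat_pi_eq using gam_total_pos by (simp add: sum_divide_distrib[symmetric] gam_total_def)

lemma stat_pi_bounds:
  assumes "z \<in> Lat"
  shows "1 / (16 * Lat_size) \<le> w z" "w z \<le> 16 / Lat_size"
  using gam_total_bounds[OF assms] gam_total_pos Lat_size_pos gam_ge_1[OF assms]
  unfolding stat_pi_eq by (simp_all add: field_simps)

lemma n_over_Lat_size: "\<epsilon>^2 / 4 \<le> real n / Lat_size" "real n / Lat_size \<le> \<epsilon>^2"
proof -
  define q where "q = real side + 1"
  have q0: "q > 0" unfolding q_def by simp
  have "(q * \<epsilon>)^2 \<le> (2 * sqrt (real n))^2"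
    using side_times_eps(2) q0 e0 unfolding q_def by (intro power_mono) auto
  then have a: "q^2 * \<epsilon>^2 \<le> 4 * real n" by (simp add: power_mult_distrib)
  have "(sqrt (real n))^2 \<le> (q * \<epsilon>)^2"
    using side_times_eps(1) unfolding q_def by (intro power_mono) auto
  then have b: "real n \<le> q^2 * \<epsilon>^2" by (simp add: power_mult_distrib)
  have Lq: "Lat_size = q^2" unfolding Lat_size_eq q_def ..
  show "\<epsilon>^2 / 4 \<le> real n / Lat_size" unfolding Lq using a q0 by (simp add: field_simps)
  show "real n / Lat_size \<le> \<epsilon>^2" unfolding Lq using b q0 by (simp add: field_simps)
qed

definition cell_prob :: "nat \<times> nat \<Rightarrow> real" where
  "cell_prob g = sum w {z\<in>Lat. cell z = g}"

text \<open>The expected number of nodes in each cell is between R^2/6400 and 3 R^2: a cell has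
  between width^2 and 4 width^2 points, each of probability about 1/Lat_size, and
  n / Lat_size is about eps^2, while width * eps is about R.\<close>
lemma cell_prob_bounds:
  assumes g: "g \<in> {0..<ncells} \<times> {0..<ncells}"
  shows "R^2 / 6400 \<le> real n * cell_prob g" "real n * cell_prob g \<le> 3 * R^2"
proof -
  define C where "C = {z\<in>Lat. cell z = g}"
  note card_C = card_cell_points_bounds[OF g, folded C_def]
  have CL: "C \<subseteq> Lat" unfolding C_def by auto
  have "(\<Sum>z\<in>C. 1 / (16 * Lat_size)) \<le> (\<Sum>z\<in>C. w z)"
    using stat_pi_bounds(1) CL by (intro sum_mono) auto
  then have "real (card C) / (16 * Lat_size) \<le> cell_prob g"
    unfolding cell_prob_def C_def[symmetric] by simp
  then have plo: "real n * (real (card C) / (16 * Lat_size)) \<le> real n * cell_prob g"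
    by (rule mult_left_mono) simp
  have "(\<epsilon>^2 / 4) * (real width ^ 2) / 16 \<le> (real n / Lat_size) * real (card C) / 16"
    using n_over_Lat_size(1) card_C(1) e0 Lat_size_pos by (intro divide_right_mono mult_mono) auto
  also have "\<dots> = real n * (real (card C) / (16 * Lat_size))" by simp
  also have "\<dots> \<le> real n * cell_prob g" by (rule plo)
  finally have lower: "(real width * \<epsilon>)^2 / 64 \<le> real n * cell_prob g"
    by (simp add: power_mult_distrib mult.commute)
  have "(R / 10)^2 \<le> (real width * \<epsilon>)^2" using width_bounds(3) R10 by (intro power_mono) auto
  then show "R^2 / 6400 \<le> real n * cell_prob g" using lower by (simp add: power_divide)
  have "(\<Sum>z\<in>C. w z) \<le> (\<Sum>z\<in>C. 16 / Lat_size)"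
    using stat_pi_bounds(2) CL by (intro sum_mono) auto
  then have "cell_prob g \<le> 16 * real (card C) / Lat_size"
    unfolding cell_prob_def C_def[symmetric] by (simp add: field_simps)
  then have "real n * cell_prob g \<le> real n * (16 * real (card C) / Lat_size)"
    by (rule mult_left_mono) simp
  also have "\<dots> = 16 * (real n / Lat_size) * real (card C)" by simp
  also have "\<dots> \<le> 16 * \<epsilon>^2 * (4 * real width ^ 2)"
    using n_over_Lat_size(2) card_C(2) Lat_size_pos by (intro mult_mono) auto
  finally have upper: "real n * cell_prob g \<le> 64 * (real width * \<epsilon>)^2"
    by (simp add: power_mult_distrib mult.commute)
  have "(real width * \<epsilon>)^2 \<le> (R / 5)^2" using width_bounds(2) e0 by (intro power_mono) auto
  then show "real n * cell_prob g \<le> 3 * R^2"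
    using upper zero_le_power2[of R] by (simp add: power_divide; linarith)
qed

end

subsection \<open>With high probability every cell holds about R^2 nodes\<close>

lemma sum_Un_le:
  fixes f :: "'a \<Rightarrow> real"
  assumes "finite S" "finite T" "\<And>x. x \<in> S \<union> T \<Longrightarrow> f x \<ge> 0"
  shows "sum f (S \<union> T) \<le> sum f S + sum f T"
proof -
  have "sum f (S \<inter> T) \<ge> 0" using assms(3) by (intro sum_nonneg) auto
  then show ?thesis using sum_Un[OF assms(1,2), of f] by linarith
qed

lemma union_bound:
  fixes f :: "'a \<Rightarrow> real"
  assumes A: "finite A" and K: "finite K" and nn: "\<And>x. x \<in> A \<Longrightarrow> f x \<ge> 0"
  shows "(\<Sum>x\<in>{x\<in>A. \<exists>g\<in>K. B g x}. f x) \<le> (\<Sum>g\<in>K. \<Sum>x\<in>{x\<in>A. B g x}. f x)"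
  using K
proof (induction K rule: finite_induct)
  case empty
  then show ?case by simp
next
  case (insert g K)
  have "{x\<in>A. \<exists>g'\<in>insert g K. B g' x} = {x\<in>A. B g x} \<union> {x\<in>A. \<exists>g'\<in>K. B g' x}" by auto
  then have "(\<Sum>x\<in>{x\<in>A. \<exists>g'\<in>insert g K. B g' x}. f x)
      \<le> (\<Sum>x\<in>{x\<in>A. B g x}. f x) + (\<Sum>x\<in>{x\<in>A. \<exists>g'\<in>K. B g' x}. f x)"
    using A nn by (simp only:) (rule sum_Un_le; auto)
  then show ?case
    using insert.IH sum.insert[OF insert.hyps, of "\<lambda>g. \<Sum>x\<in>{x\<in>A. B g x}. f x"] by linarith
qed

context meg_setup
begin

definition well_spread :: "(nat \<Rightarrow> real \<times> real) \<Rightarrow> bool" where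
  "well_spread P \<longleftrightarrow> (\<forall>g\<in>{0..<ncells} \<times> {0..<ncells}.
    R^2/25600 \<le> real (card {i\<in>{0..<n}. P i \<in> {z. cell z = g}}) \<and>
    real (card {i\<in>{0..<n}. P i \<in> {z. cell z = g}}) \<le> 9 * R^2)"

abbreviation configs :: "(nat \<Rightarrow> real \<times> real) set" where
  "configs \<equiv> PiE {0..<n} (\<lambda>_. Lat)"

lemma total_weight: "(\<Sum>P\<in>configs. \<Prod>i\<in>{0..<n}. w (P i)) = 1"
  using sum_PiE_prod_power[OF finite_Lat, of w n] stat_pi_sum by simp

lemma weight_nonneg: "(\<Prod>i\<in>{0..<n}. w (P i)) \<ge> 0"
  using stat_pi_nonneg by (intro prod_nonneg) auto

lemma finite_configs: "finite configs"
  using finite_Lat by (simp add: finite_PiE)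

lemma cell_deviation_prob:
  assumes g: "g \<in> {0..<ncells} \<times> {0..<ncells}"
  shows "(\<Sum>P\<in>{P\<in>configs. real (card {i\<in>{0..<n}. P i \<in> {z. cell z = g}}) \<le> real n * cell_prob g / 4
            \<or> 3 * (real n * cell_prob g) \<le> real (card {i\<in>{0..<n}. P i \<in> {z. cell z = g}})}.
           \<Prod>i\<in>{0..<n}. w (P i)) \<le> 2 * exp (- (R^2) / 25600)"
  (is "(\<Sum>P\<in>{P\<in>configs. ?X P \<le> ?lo \<or> ?hi \<le> ?X P}. ?f P) \<le> _")
proof -
  have p: "cell_prob g = sum w {x\<in>Lat. x \<in> {z. cell z = g}}" unfolding cell_prob_def by simp
  have "{P\<in>configs. ?X P \<le> ?lo \<or> ?hi \<le> ?X P} = {P\<in>configs. ?X P \<le> ?lo} \<union> {P\<in>configs. ?hi \<le> ?X P}"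
    by auto
  then have "(\<Sum>P\<in>{P\<in>configs. ?X P \<le> ?lo \<or> ?hi \<le> ?X P}. ?f P)
      \<le> (\<Sum>P\<in>{P\<in>configs. ?X P \<le> ?lo}. ?f P) + (\<Sum>P\<in>{P\<in>configs. ?hi \<le> ?X P}. ?f P)"
    using finite_configs weight_nonneg by (simp only:) (rule sum_Un_le; auto)
  also have "\<dots> \<le> exp (?lo - real n * cell_prob g / 2) + exp (2 * real n * cell_prob g - ?hi)"
  proof (rule add_mono)
    show "(\<Sum>P\<in>{P\<in>configs. ?X P \<le> ?lo}. ?f P) \<le> exp (?lo - real n * cell_prob g / 2)"
      by (rule chernoff_lower[OF finite_Lat _ stat_pi_sum p]) (rule stat_pi_nonneg)
    show "(\<Sum>P\<in>{P\<in>configs. ?hi \<le> ?X P}. ?f P) \<le> exp (2 * real n * cell_prob g - ?hi)"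
      by (rule chernoff_upper[OF finite_Lat _ stat_pi_sum p]) (rule stat_pi_nonneg)
  qed
  also have "\<dots> \<le> exp (- (R^2) / 25600) + exp (- (R^2) / 25600)"
  proof -
    have "R^2 / 25600 \<le> real n * cell_prob g / 4" "R^2 / 25600 \<le> real n * cell_prob g"
      using cell_prob_bounds(1)[OF g] zero_le_power2[of R] by linarith+
    then show ?thesis by (intro add_mono) simp_all
  qed
  finally show ?thesis by simp
qed

lemma spread_failure_prob:
  "(\<Sum>P\<in>{P\<in>configs. \<not> well_spread P}. \<Prod>i\<in>{0..<n}. w (P i)) \<le> 8 * real n * exp (- (R^2) / 25600)"
proof -
  let ?G = "{0..<ncells} \<times> {0..<ncells}"
  let ?X = "\<lambda>g P. real (card {i\<in>{0..<n}. P i \<in> {z. cell z = g}})"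
  let ?f = "\<lambda>P. \<Prod>i\<in>{0..<n}. w (P i)"
  let ?B = "\<lambda>g P. ?X g P \<le> real n * cell_prob g / 4 \<or> 3 * (real n * cell_prob g) \<le> ?X g P"
  have "{P\<in>configs. \<not> well_spread P} \<subseteq> {P\<in>configs. \<exists>g\<in>?G. ?B g P}"
  proof clarify
    fix P assume "P \<in> configs" "\<not> well_spread P"
    then obtain g where g: "g \<in> ?G" "?X g P < R^2/25600 \<or> ?X g P > 9 * R^2"
      unfolding well_spread_def by auto
    then have "?B g P" using cell_prob_bounds[OF g(1)] by auto
    then show "\<exists>g\<in>?G. ?B g P" using g(1) by blast
  qed
  then have "(\<Sum>P\<in>{P\<in>configs. \<not> well_spread P}. ?f P) \<le> (\<Sum>P\<in>{P\<in>configs. \<exists>g\<in>?G. ?B g P}. ?f P)"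
    using finite_configs weight_nonneg by (intro sum_mono2) auto
  also have "\<dots> \<le> (\<Sum>g\<in>?G. \<Sum>P\<in>{P\<in>configs. ?B g P}. ?f P)"
    using finite_configs weight_nonneg by (intro union_bound) auto
  also have "\<dots> \<le> (\<Sum>g\<in>?G. 2 * exp (- (R^2) / 25600))"
    using cell_deviation_prob by (intro sum_mono) auto
  also have "\<dots> = real (ncells^2) * (2 * exp (- (R^2) / 25600))" by (simp add: power2_eq_square)
  also have "\<dots> \<le> (4 * real n) * (2 * exp (- (R^2) / 25600))"
    using ncells_sq by (intro mult_right_mono) auto
  finally show ?thesis by simp
qed

text \<open>A well-spread configuration satisfies the hypotheses of the cell-graph locale.\<close>
lemma well_spread_expander:
  assumes P: "P \<in> configs" and G: "well_spread P"
  shows "(\<forall>h::nat. 1 \<le> h \<and> real h \<le> (1/51200) * R^2 \<longrightarrow>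
            is_expander n (meg_adj R P) h ((1/51200) * R^2 / real h)) \<and>
         (\<forall>h::nat. (1/51200) * R^2 \<le> real h \<and> real h \<le> real n / 2 \<longrightarrow>
            is_expander n (meg_adj R P) h ((1/10^9) * R / sqrt (real h)))"
proof -
  have PL: "i < n \<Longrightarrow> P i \<in> Lat" for i using P by (auto simp: PiE_def Pi_def)
  interpret cell_graph n ncells "\<lambda>i. cell (P i)" "meg_adj R P" "R^2/25600" "9 * R^2"
  proof
    fix i assume "i < n"
    then show "cell (P i) \<in> {0..<ncells} \<times> {0..<ncells}" using cell_in_grid_Lat PL by blast
  next
    fix i j assume ij: "i < n" "j < n" "i \<noteq> j"
      "cell (P i) = cell (P j) \<or> grid_adj (cell (P i)) (cell (P j))"
    have "eucl_dist (P i) (P j) \<le> R"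
      by (rule adjacent_cells_close[OF PL[OF ij(1)] PL[OF ij(2)]])
        (use ij(4) in \<open>auto simp: grid_adj_def\<close>)
    then show "meg_adj R P i j" unfolding meg_adj_def using ij by auto
  next
    fix g assume "g \<in> {0..<ncells} \<times> {0..<ncells}"
    then show "R^2/25600 \<le> real (card {i\<in>{0..<n}. cell (P i) = g})"
      "real (card {i\<in>{0..<n}. cell (P i) = g}) \<le> 9 * R^2"
      using G unfolding well_spread_def by auto
  next
    show "R^2/25600 > 0" using R10 by simp
  qed
  show ?thesis by (rule expander_properties) (use R10 in auto)
qed

theorem expander_prob:
  "stationary_prob n r R \<epsilon>
     (\<lambda>adj. (\<forall>h::nat. 1 \<le> h \<and> real h \<le> (1/51200) * R^2 \<longrightarrow>
                 is_expander n adj h ((1/51200) * R^2 / real h)) \<and>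
          (\<forall>h::nat. (1/51200) * R^2 \<le> real h \<and> real h \<le> real n / 2 \<longrightarrow>
                 is_expander n adj h ((1/10^9) * R / sqrt (real h))))
   \<ge> 1 - 8 * real n * exp (- (R^2) / 25600)"
  (is "stationary_prob n r R \<epsilon> ?Q \<ge> _")
proof -
  let ?f = "\<lambda>P. \<Prod>i\<in>{0..<n}. w (P i)"
  have "(\<Sum>P\<in>{P\<in>configs. well_spread P} \<union> {P\<in>configs. \<not> well_spread P}. ?f P)
      = (\<Sum>P\<in>{P\<in>configs. well_spread P}. ?f P) + (\<Sum>P\<in>{P\<in>configs. \<not> well_spread P}. ?f P)"
    using finite_configs by (intro sum.union_disjoint) auto
  moreover have "{P\<in>configs. well_spread P} \<union> {P\<in>configs. \<not> well_spread P} = configs" by auto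
  ultimately have "1 = (\<Sum>P\<in>{P\<in>configs. well_spread P}. ?f P) + (\<Sum>P\<in>{P\<in>configs. \<not> well_spread P}. ?f P)"
    using total_weight by simp
  moreover have "(\<Sum>P\<in>{P\<in>configs. well_spread P}. ?f P) \<le> (\<Sum>P\<in>{P\<in>configs. ?Q (meg_adj R P)}. ?f P)"
    using finite_configs weight_nonneg well_spread_expander by (intro sum_mono2) auto
  moreover have "(\<Sum>P\<in>{P\<in>configs. ?Q (meg_adj R P)}. ?f P) = stationary_prob n r R \<epsilon> ?Q"
    unfolding stationary_prob_def by simp
  ultimately show ?thesis using spread_failure_prob by linarith
qed

end

text \<open>For R \<ge> 320 sqrt(ln n) the failure probability 8 n exp(-R^2/25600) is at most
  8 n^-3 \<le> n^-2.\<close>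
lemma failure_prob_small:
  assumes n8: "n \<ge> 8" and R: "320 * sqrt (ln (real n)) \<le> R"
  shows "8 * real n * exp (- (R^2) / 25600) \<le> 1 / (real n)^2" and "R \<ge> 10"
proof -
  have npos: "real n > 0" using n8 by simp
  have "exp 1 \<le> real n" using exp_le n8 by linarith
  then have ln1: "ln (real n) \<ge> 1" using npos by (simp add: ln_ge_iff)
  then have sq1: "sqrt (ln (real n)) \<ge> 1" by simp
  then show "R \<ge> 10" using R by linarith
  have "(320 * sqrt (ln (real n)))^2 \<le> R^2" using R sq1 by (intro power_mono) auto
  then have "102400 * ln (real n) \<le> R^2" using ln1 by (simp add: power_mult_distrib)
  then have "exp (- (R^2) / 25600) \<le> exp (- (4 * ln (real n)))" by simp
  also have "\<dots> = 1 / real n ^ 4"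
    using exp_of_nat_mult[of 4 "ln (real n)"] npos by (simp add: exp_minus field_simps)
  finally have "8 * real n * exp (- (R^2) / 25600) \<le> 8 * real n * (1 / real n ^ 4)"
    using npos by (intro mult_left_mono) auto
  also have "\<dots> = 8 / real n * (1 / (real n)^2)" using npos by (simp add: field_simps power_eq_if)
  also have "\<dots> \<le> 1 / (real n)^2" using n8 by (intro mult_left_le_one_le) simp_all
  finally show "8 * real n * exp (- (R^2) / 25600) \<le> 1 / (real n)^2" .
qed

theorem mainTheorem7:
  "\<exists>c \<alpha> \<beta> :: real. c > 0 \<and> \<alpha> > 0 \<and> \<beta> > 0 \<and>
    (\<exists>n0::nat. \<forall>n \<ge> n0. \<forall>r \<epsilon> R :: real.
       r \<ge> 0 \<and> 0 < \<epsilon> \<and> \<epsilon> \<le> 1 \<and> \<epsilon> < R \<and>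
       c * sqrt (ln (real n)) \<le> R \<and> R \<le> sqrt (real n) \<longrightarrow>
       stationary_prob n r R \<epsilon>
         (\<lambda>adj. (\<forall>h::nat. 1 \<le> h \<and> real h \<le> \<alpha> * R^2 \<longrightarrow>
                       is_expander n adj h (\<alpha> * R^2 / real h)) \<and>
                (\<forall>h::nat. \<alpha> * R^2 \<le> real h \<and> real h \<le> real n / 2 \<longrightarrow>
                       is_expander n adj h (\<beta> * R / sqrt (real h))))
       \<ge> 1 - 1 / (real n)^2)"
proof (intro exI conjI allI impI)
  show "(320::real) > 0" "(1/51200::real) > 0" "(1/10^9::real) > 0" by simp_all
  fix n :: nat and r \<epsilon> R :: real
  assume n8: "n \<ge> 8" and A: "r \<ge> 0 \<and> 0 < \<epsilon> \<and> \<epsilon> \<le> 1 \<and> \<epsilon> < R \<and>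
    320 * sqrt (ln (real n)) \<le> R \<and> R \<le> sqrt (real n)"
  note small = failure_prob_small[OF n8, of R]
  interpret meg_setup n \<epsilon> r R using A small(2) by unfold_locales auto
  show "1 - 1 / (real n)^2 \<le> stationary_prob n r R \<epsilon>
         (\<lambda>adj. (\<forall>h::nat. 1 \<le> h \<and> real h \<le> 1/51200 * R^2 \<longrightarrow>
                       is_expander n adj h (1/51200 * R^2 / real h)) \<and>
                (\<forall>h::nat. 1/51200 * R^2 \<le> real h \<and> real h \<le> real n / 2 \<longrightarrow>
                       is_expander n adj h (1/10^9 * R / sqrt (real h))))"
    using expander_prob small(1) A by linarith
qed

end
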